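(* Assume $\mathfrak g$ is semisimple, $\Omega$ is a strongly dominant prime ideal of $\mathcal S$ and $\lambda=\lambda_\Omega$. If $w\in W$ and $w.\Omega=\Omega$, then $w(B_\lambda)=B_\lambda$.
   Context: $F$ is an algebraically closed field of characteristic zero; $\mathfrak g$ is a semisimple Lie algebra over $F$ with Cartan subalgebra $\mathfrak h$, root system $R$, positive system $R^+$, Weyl group $W$, $\rho=\frac12\sum_{\alpha\in R^+}\alpha$, dot action $w.\xi=w(\xi+\rho)-\rho$; $H_\alpha$ is the coroot of $\alpha$. $\mathcal S=S(\mathfrak h)$ is identified with polynomial functions on $\mathfrak h^*$, with $(w.f)(\xi)=f(w^{-1}.\xi)$ and $w.\Omega=\{w.f:f\in\Omega\}$; $\mathcal V(\Omega)$ is the zero set. For a prime $\Omega$, $\mathbb F$ is the fraction field of $\mathcal S/\Omega$, $\lambda_\Omega$ the $\mathbb F$-linear extension of $\mathfrak h\hookrightarrow\mathcal S\to\mathcal S/\Omega\hookrightarrow\mathbb F$. $P^+$ is the set of dominant integral weights; $\Omega$ is strongly dominant if $\mathcal V(\Omega)\cap P^+$ is Zariski dense in $\mathcal V(\Omega)$. For $\lambda=\lambda_\Omega$: $R_\lambda=\{\alpha\in R: H_\alpha-n\in\Omega\text{ for some }n\in\mathbb Z\}$, $R_\lambda^+=R^+\cap R_\lambda$, $B_\lambda$ the simple roots of $R_\lambda$ in $R_\lambda^+$. *)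

theory Defs
  imports "HOL-Algebra.Ideal"
begin

text \<open>The dual Cartan subalgebra h* is modelled as the coordinate space
  'n \<Rightarrow> 'a (F = 'a, 'n a finite index type, dim h* = CARD('n)); elements of h are
  likewise coefficient vectors, with pairing xi(H) = sum_i xi i * H i.
  The semisimple Lie algebra enters only through its root system R in h*, the
  coroots H_alpha = cor alpha in h, and a positive system Rpos.\<close>

definition alg_closed :: "'a::field itself \<Rightarrow> bool" where
  "alg_closed _ \<longleftrightarrow> (\<forall>(n::nat) (c::nat \<Rightarrow> 'a). n > 0 \<longrightarrow>
      (\<exists>x. x ^ n + (\<Sum>i<n. c i * x ^ i) = 0))"

definition pair :: "('n::finite \<Rightarrow> 'a::field) \<Rightarrow> ('n \<Rightarrow> 'a) \<Rightarrow> 'a" where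
  "pair xi H = (\<Sum>i\<in>UNIV. xi i * H i)"

definition reflection :: "(('n::finite \<Rightarrow> 'a::field) \<Rightarrow> ('n \<Rightarrow> 'a)) \<Rightarrow> ('n \<Rightarrow> 'a)
    \<Rightarrow> ('n \<Rightarrow> 'a) \<Rightarrow> ('n \<Rightarrow> 'a)" where
  "reflection cor \<alpha> xi = (\<lambda>i. xi i - pair xi (cor \<alpha>) * \<alpha> i)"

text \<open>Reduced (crystallographic) root system in h*, spanning h* (semisimplicity),
  with coroot map cor.\<close>
definition root_system :: "('n::finite \<Rightarrow> 'a::field_char_0) set \<Rightarrow> (('n \<Rightarrow> 'a) \<Rightarrow> ('n \<Rightarrow> 'a)) \<Rightarrow> bool" where
  "root_system R cor \<longleftrightarrow> finite R \<and> (\<lambda>i. 0) \<notin> R \<and>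
     (\<forall>xi. \<exists>c. xi = (\<lambda>i. \<Sum>\<alpha>\<in>R. c \<alpha> * \<alpha> i)) \<and>
     (\<forall>\<alpha>\<in>R. pair \<alpha> (cor \<alpha>) = 2) \<and>
     (\<forall>\<alpha>\<in>R. \<forall>\<beta>\<in>R. reflection cor \<alpha> \<beta> \<in> R) \<and>
     (\<forall>\<alpha>\<in>R. \<forall>\<beta>\<in>R. pair \<beta> (cor \<alpha>) \<in> \<int>) \<and>
     (\<forall>\<alpha>\<in>R. \<forall>c. (\<lambda>i. c * \<alpha> i) \<in> R \<longrightarrow> c = 1 \<or> c = -1)"

definition positive_system :: "('n::finite \<Rightarrow> 'a::field_char_0) set \<Rightarrow> ('n \<Rightarrow> 'a) set \<Rightarrow> bool" where
  "positive_system R Rpos \<longleftrightarrow> Rpos \<subseteq> R \<and> (\<exists>\<Delta>\<subseteq>R.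
     (\<forall>c. (\<lambda>i. \<Sum>\<delta>\<in>\<Delta>. c \<delta> * \<delta> i) = (\<lambda>i. 0) \<longrightarrow> (\<forall>\<delta>\<in>\<Delta>. c \<delta> = 0)) \<and>
     (\<forall>\<beta>\<in>R. \<exists>k::('n \<Rightarrow> 'a) \<Rightarrow> int. \<beta> = (\<lambda>i. \<Sum>\<delta>\<in>\<Delta>. of_int (k \<delta>) * \<delta> i) \<and>
        (((\<forall>\<delta>\<in>\<Delta>. k \<delta> \<ge> 0) \<and> \<beta> \<in> Rpos) \<or> ((\<forall>\<delta>\<in>\<Delta>. k \<delta> \<le> 0) \<and> \<beta> \<notin> Rpos))))"

inductive_set weyl_group :: "('n::finite \<Rightarrow> 'a::field) set \<Rightarrow> (('n \<Rightarrow> 'a) \<Rightarrow> ('n \<Rightarrow> 'a))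
    \<Rightarrow> (('n \<Rightarrow> 'a) \<Rightarrow> ('n \<Rightarrow> 'a)) set" for R cor where
  weyl_id: "id \<in> weyl_group R cor"
| weyl_step: "\<alpha> \<in> R \<Longrightarrow> w \<in> weyl_group R cor \<Longrightarrow> reflection cor \<alpha> \<circ> w \<in> weyl_group R cor"

definition rho :: "('n::finite \<Rightarrow> 'a::field) set \<Rightarrow> ('n \<Rightarrow> 'a)" where
  "rho Rpos = (\<lambda>i. (\<Sum>\<alpha>\<in>Rpos. \<alpha> i) / 2)"

definition dot :: "('n::finite \<Rightarrow> 'a::field) set \<Rightarrow> (('n \<Rightarrow> 'a) \<Rightarrow> ('n \<Rightarrow> 'a)) \<Rightarrow> ('n \<Rightarrow> 'a) \<Rightarrow> ('n \<Rightarrow> 'a)" where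
  "dot Rpos w xi = (\<lambda>i. w (\<lambda>j. xi j + rho Rpos j) i - rho Rpos i)"

text \<open>S = S(h), identified with polynomial functions on h*.\<close>
inductive_set polyfun :: "(('n::finite \<Rightarrow> 'a::field) \<Rightarrow> 'a) set" where
  pf_const: "(\<lambda>xi. c) \<in> polyfun"
| pf_coord: "(\<lambda>xi. xi i) \<in> polyfun"
| pf_add: "f \<in> polyfun \<Longrightarrow> g \<in> polyfun \<Longrightarrow> (\<lambda>xi. f xi + g xi) \<in> polyfun"
| pf_mult: "f \<in> polyfun \<Longrightarrow> g \<in> polyfun \<Longrightarrow> (\<lambda>xi. f xi * g xi) \<in> polyfun"

definition S_ring :: "(('n::finite \<Rightarrow> 'a::field) \<Rightarrow> 'a) ring" where
  "S_ring = \<lparr>carrier = polyfun, monoid.mult = (\<lambda>f g xi. f xi * g xi), one = (\<lambda>xi. 1),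
             ring.zero = (\<lambda>xi. 0), ring.add = (\<lambda>f g xi. f xi + g xi)\<rparr>"

definition act_ideal :: "('n::finite \<Rightarrow> 'a::field) set \<Rightarrow> (('n \<Rightarrow> 'a) \<Rightarrow> ('n \<Rightarrow> 'a))
    \<Rightarrow> (('n \<Rightarrow> 'a) \<Rightarrow> 'a) set \<Rightarrow> (('n \<Rightarrow> 'a) \<Rightarrow> 'a) set" where
  "act_ideal Rpos w \<Omega> = (\<lambda>f. \<lambda>xi. f (dot Rpos (inv_into UNIV w) xi)) ` \<Omega>"

definition zero_set :: "(('n::finite \<Rightarrow> 'a::field) \<Rightarrow> 'a) set \<Rightarrow> ('n \<Rightarrow> 'a) set" where
  "zero_set \<Omega> = {xi. \<forall>f\<in>\<Omega>. f xi = 0}"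

definition dominant_integral :: "('n::finite \<Rightarrow> 'a::field_char_0) set \<Rightarrow> (('n \<Rightarrow> 'a) \<Rightarrow> ('n \<Rightarrow> 'a)) \<Rightarrow> ('n \<Rightarrow> 'a) set" where
  "dominant_integral Rpos cor = {xi. \<forall>\<alpha>\<in>Rpos. pair xi (cor \<alpha>) \<in> \<nat>}"

definition zariski_dense_in :: "('n::finite \<Rightarrow> 'a::field) set \<Rightarrow> ('n \<Rightarrow> 'a) set \<Rightarrow> bool" where
  "zariski_dense_in A B \<longleftrightarrow> A \<subseteq> B \<and>
     (\<forall>f\<in>(polyfun :: (('n \<Rightarrow> 'a) \<Rightarrow> 'a) set). (\<forall>xi\<in>A. f xi = 0) \<longrightarrow> (\<forall>xi\<in>B. f xi = 0))"

definition strongly_dominant :: "('n::finite \<Rightarrow> 'a::field_char_0) set \<Rightarrow> (('n \<Rightarrow> 'a) \<Rightarrow> ('n \<Rightarrow> 'a))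
    \<Rightarrow> (('n \<Rightarrow> 'a) \<Rightarrow> 'a) set \<Rightarrow> bool" where
  "strongly_dominant Rpos cor \<Omega> \<longleftrightarrow>
     zariski_dense_in (zero_set \<Omega> \<inter> dominant_integral Rpos cor) (zero_set \<Omega>)"

definition integral_roots :: "('n::finite \<Rightarrow> 'a::field) set \<Rightarrow> (('n \<Rightarrow> 'a) \<Rightarrow> ('n \<Rightarrow> 'a))
    \<Rightarrow> (('n \<Rightarrow> 'a) \<Rightarrow> 'a) set \<Rightarrow> ('n \<Rightarrow> 'a) set" where
  "integral_roots R cor \<Omega> = {\<alpha>\<in>R. \<exists>n::int. (\<lambda>xi. pair xi (cor \<alpha>) - of_int n) \<in> \<Omega>}"

definition simple_roots :: "('n \<Rightarrow> 'a::field) set \<Rightarrow> ('n \<Rightarrow> 'a) set" where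
  "simple_roots P = {\<alpha>\<in>P. \<not> (\<exists>\<beta>\<in>P. \<exists>\<gamma>\<in>P. \<alpha> = (\<lambda>i. \<beta> i + \<gamma> i))}"

definition B_lambda :: "('n::finite \<Rightarrow> 'a::field) set \<Rightarrow> ('n \<Rightarrow> 'a) set \<Rightarrow> (('n \<Rightarrow> 'a) \<Rightarrow> ('n \<Rightarrow> 'a))
    \<Rightarrow> (('n \<Rightarrow> 'a) \<Rightarrow> 'a) set \<Rightarrow> ('n \<Rightarrow> 'a) set" where
  "B_lambda R Rpos cor \<Omega> = simple_roots (integral_roots R cor \<Omega> \<inter> Rpos)"

end

theory Submission
  imports Defs "HOL-Library.Function_Algebras" "HOL-Computational_Algebra.Polynomial"
begin

text \<open>By the weak Nullstellensatz the prime ideal \<open>\<Omega>\<close> has a zero, so strong dominance provides a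
  zero \<open>\<xi>\<close> of \<open>\<Omega>\<close> that is dominant integral. Let \<open>\<alpha>\<close> be a positive root with \<open>H\<^sub>\<alpha> - n \<in> \<Omega>\<close>.
  Transporting this element by \<open>w\<close>, the equation \<open>w.\<Omega> = \<Omega>\<close> gives \<open>H\<^bsub>w \<alpha>\<^esub> - c \<in> \<Omega>\<close> with
  \<open>c = n + \<langle>\<rho>, H\<^sub>\<alpha>\<rangle> - \<langle>\<rho>, H\<^bsub>w \<alpha>\<^esub>\<rangle>\<close>, and evaluating at \<open>\<xi>\<close> yields
  \<open>\<langle>\<xi> + \<rho>, H\<^bsub>w \<alpha>\<^esub>\<rangle> = \<langle>\<xi> + \<rho>, H\<^sub>\<alpha>\<rangle>\<close>. Since \<open>\<xi> + \<rho>\<close> pairs to a positive half-integer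
  with the coroot of every positive root and to a negative one with the coroot of every negative root,
  \<open>w \<alpha>\<close> is positive, and then \<open>c = \<langle>\<xi>, H\<^bsub>w \<alpha>\<^esub>\<rangle>\<close> is an integer. Thus \<open>w\<close> maps the
  finite set \<open>R\<^sub>\<lambda>\<^sup>+\<close> injectively into, hence onto, itself, and being additive it preserves
  its indecomposable elements \<open>B\<^sub>\<lambda>\<close>.\<close>

section \<open>Polynomial functions in a set of variables\<close>

inductive_set polyfun_in :: "'n set \<Rightarrow> (('n \<Rightarrow> 'a::comm_ring_1) \<Rightarrow> 'a) set" for S where
  polyfun_in_const: "(\<lambda>x. c) \<in> polyfun_in S"
| polyfun_in_var: "i \<in> S \<Longrightarrow> (\<lambda>x. x i) \<in> polyfun_in S"
| polyfun_in_add: "f \<in> polyfun_in S \<Longrightarrow> g \<in> polyfun_in S \<Longrightarrow> f + g \<in> polyfun_in S"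
| polyfun_in_mult: "f \<in> polyfun_in S \<Longrightarrow> g \<in> polyfun_in S \<Longrightarrow> f * g \<in> polyfun_in S"

lemma polyfun_in_zero: "0 \<in> polyfun_in S"
  using polyfun_in_const[of 0] by (simp add: zero_fun_def)

lemma polyfun_in_one: "1 \<in> polyfun_in S"
  using polyfun_in_const[of 1] by (simp add: one_fun_def)

lemma polyfun_in_uminus: "f \<in> polyfun_in S \<Longrightarrow> - f \<in> polyfun_in S"
  using polyfun_in_mult[OF polyfun_in_const[of "- 1"], of f] by (simp add: times_fun_def fun_Compl_def)

lemma polyfun_in_diff: "f \<in> polyfun_in S \<Longrightarrow> g \<in> polyfun_in S \<Longrightarrow> f - g \<in> polyfun_in S"
  using polyfun_in_add[OF _ polyfun_in_uminus, of f S g] by simp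

lemma polyfun_in_sum: "(\<And>i. i \<in> A \<Longrightarrow> f i \<in> polyfun_in S) \<Longrightarrow> (\<Sum>i\<in>A. f i) \<in> polyfun_in S"
  by (induction A rule: infinite_finite_induct) (auto intro: polyfun_in_zero polyfun_in_add)

lemma polyfun_in_power: "f \<in> polyfun_in S \<Longrightarrow> f ^ n \<in> polyfun_in S"
  by (induction n) (auto intro: polyfun_in_one polyfun_in_mult)

lemma polyfun_in_mono: "f \<in> polyfun_in S \<Longrightarrow> S \<subseteq> T \<Longrightarrow> f \<in> polyfun_in T"
  by (induction f rule: polyfun_in.induct) (auto intro: polyfun_in.intros)

lemma polyfun_in_cong: "f \<in> polyfun_in S \<Longrightarrow> (\<And>i. i \<in> S \<Longrightarrow> x i = y i) \<Longrightarrow> f x = f y"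
  by (induction f rule: polyfun_in.induct) auto

lemma polyfun_in_empty: "f \<in> polyfun_in {} \<Longrightarrow> \<exists>c. f = (\<lambda>_. c)"
  by (induction f rule: polyfun_in.induct) (auto simp: plus_fun_def times_fun_def)

lemma polyfun_in_UNIV: "polyfun_in UNIV = polyfun"
proof (intro Set.set_eqI iffI)
  fix f :: "('a \<Rightarrow> 'b) \<Rightarrow> 'b"
  assume "f \<in> polyfun_in UNIV"
  then show "f \<in> polyfun"
    by (induction f rule: polyfun_in.induct) (auto intro: polyfun.intros simp: plus_fun_def times_fun_def)
next
  fix f :: "('a \<Rightarrow> 'b) \<Rightarrow> 'b"
  assume "f \<in> polyfun"
  then show "f \<in> polyfun_in UNIV"
    by (induction f rule: polyfun.induct)
      (auto intro: polyfun_in.intros polyfun_in_add[unfolded plus_fun_def]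
        polyfun_in_mult[unfolded times_fun_def])
qed

lemma fun_power_apply: "(f ^ n) x = f x ^ n"
  by (induction n) auto

definition coeffs_in :: "'n set \<Rightarrow> (('n \<Rightarrow> 'a::comm_ring_1) \<Rightarrow> 'a) poly \<Rightarrow> bool" where
  "coeffs_in S Q \<longleftrightarrow> (\<forall>m. coeff Q m \<in> polyfun_in S)"

lemma coeffs_in_0: "coeffs_in S 0"
  by (simp add: coeffs_in_def polyfun_in_zero)

lemma coeffs_in_pCons: "coeffs_in S (pCons a Q) \<longleftrightarrow> a \<in> polyfun_in S \<and> coeffs_in S Q"
  by (auto simp: coeffs_in_def coeff_pCons split: nat.splits)

lemma coeffs_in_const: "c \<in> polyfun_in S \<Longrightarrow> coeffs_in S [:c:]"
  by (simp add: coeffs_in_pCons coeffs_in_0)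

lemma coeffs_in_add: "coeffs_in S P \<Longrightarrow> coeffs_in S Q \<Longrightarrow> coeffs_in S (P + Q)"
  by (simp add: coeffs_in_def polyfun_in_add)

lemma coeffs_in_diff: "coeffs_in S P \<Longrightarrow> coeffs_in S Q \<Longrightarrow> coeffs_in S (P - Q)"
  by (simp add: coeffs_in_def polyfun_in_diff)

lemma coeffs_in_mult: "coeffs_in S P \<Longrightarrow> coeffs_in S Q \<Longrightarrow> coeffs_in S (P * Q)"
  by (simp add: coeffs_in_def coeff_mult polyfun_in_sum polyfun_in_mult)

lemma coeffs_in_smult: "c \<in> polyfun_in S \<Longrightarrow> coeffs_in S Q \<Longrightarrow> coeffs_in S (smult c Q)"
  by (simp add: coeffs_in_def polyfun_in_mult)

lemma coeffs_in_monom: "c \<in> polyfun_in S \<Longrightarrow> coeffs_in S (monom c n)"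
  by (simp add: coeffs_in_def coeff_monom polyfun_in_zero)

lemma coeffs_in_power: "coeffs_in S P \<Longrightarrow> coeffs_in S (P ^ n)"
  by (induction n) (auto intro: coeffs_in_mult coeffs_in_const polyfun_in_one simp: one_pCons)

lemma coeffs_in_pseudo_divmod_main:
  "pseudo_divmod_main lc q r d dr n = (q', r') \<Longrightarrow> lc \<in> polyfun_in S \<Longrightarrow>
    coeffs_in S q \<Longrightarrow> coeffs_in S r \<Longrightarrow> coeffs_in S d \<Longrightarrow> coeffs_in S q' \<and> coeffs_in S r'"
proof (induction lc q r d dr n rule: pseudo_divmod_main.induct)
  case (1 lc q r d dr n)
  have "coeff r dr \<in> polyfun_in S"
    using "1.prems"(4) by (simp add: coeffs_in_def)
  with 1 show ?case
    by (simp add: Let_def coeffs_in_add coeffs_in_diff coeffs_in_mult coeffs_in_smult coeffs_in_monom)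
qed simp

lemma pseudo_division_coeffs_in:
  assumes "coeffs_in S f" "coeffs_in S g" "g \<noteq> 0"
  obtains k q r where "coeffs_in S q" "coeffs_in S r"
    "smult (lead_coeff g ^ k) f = g * q + r" "r = 0 \<or> degree r < degree g"
proof -
  obtain q r where qr: "pseudo_divmod f g = (q, r)"
    by fastforce
  have "lead_coeff g \<in> polyfun_in S"
    using assms(2) by (simp add: coeffs_in_def)
  then have "coeffs_in S q \<and> coeffs_in S r"
    using qr assms coeffs_in_pseudo_divmod_main[of "lead_coeff g" 0 f g]
    by (auto simp: pseudo_divmod_def coeffs_in_0)
  then show thesis
    using that pseudo_divmod[OF assms(3) qr] by blast
qed

lemma polyfun_in_insert_obtain_poly:
  "f \<in> polyfun_in (insert j S) \<Longrightarrow> \<exists>Q. coeffs_in S Q \<and> f = poly Q (\<lambda>x. x j)"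
proof (induction f rule: polyfun_in.induct)
  case (polyfun_in_const c)
  show ?case
    by (rule exI[of _ "[:\<lambda>_. c:]"]) (simp add: coeffs_in_const polyfun_in.polyfun_in_const)
next
  case (polyfun_in_var i)
  show ?case
  proof (cases "i = j")
    case True
    show ?thesis
      by (rule exI[of _ "[:0, 1:]"]) (simp add: True coeffs_in_pCons polyfun_in_zero polyfun_in_one coeffs_in_0)
  next
    case False
    with polyfun_in_var show ?thesis
      by (intro exI[of _ "[:\<lambda>x. x i:]"]) (simp add: coeffs_in_const polyfun_in.polyfun_in_var)
  qed
next
  case (polyfun_in_add f g)
  then show ?case
    by (metis coeffs_in_add poly_add)
next
  case (polyfun_in_mult f g)
  then show ?case
    by (metis coeffs_in_mult poly_mult)
qed

lemma poly_coeffs_in_polyfun_in: "coeffs_in S Q \<Longrightarrow> poly Q (\<lambda>x. x j) \<in> polyfun_in (insert j S)"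
proof (induction Q)
  case (pCons a Q)
  then have "a \<in> polyfun_in (insert j S)" "poly Q (\<lambda>x. x j) \<in> polyfun_in (insert j S)"
    by (auto simp: coeffs_in_pCons intro: polyfun_in_mono)
  then show ?case
    by (metis poly_pCons polyfun_in_add polyfun_in_mult polyfun_in_var insertI1)
qed (simp add: polyfun_in_zero)

definition eval_coeffs :: "'x \<Rightarrow> ('x \<Rightarrow> 'a::comm_ring_1) poly \<Rightarrow> 'a poly" where
  "eval_coeffs x Q = map_poly (\<lambda>c. c x) Q"

lemma coeff_eval_coeffs: "coeff (eval_coeffs x Q) m = coeff Q m x"
  by (simp add: eval_coeffs_def coeff_map_poly)

lemma poly_eval_coeffs: "poly (eval_coeffs x Q) t = poly Q (\<lambda>_. t) x"
  by (induction Q) (auto simp: eval_coeffs_def map_poly_pCons)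

lemma eval_coeffs_eq_0_iff: "eval_coeffs x Q = 0 \<longleftrightarrow> (\<forall>m. coeff Q m x = 0)"
  by (auto simp: poly_eq_iff coeff_eval_coeffs)

lemma eval_coeffs_add: "eval_coeffs x (P + Q) = eval_coeffs x P + eval_coeffs x Q"
  by (simp add: poly_eq_iff coeff_eval_coeffs)

lemma eval_coeffs_smult: "eval_coeffs x (smult c Q) = smult (c x) (eval_coeffs x Q)"
  by (simp add: poly_eq_iff coeff_eval_coeffs)

lemma eval_coeffs_mult:
  fixes P Q :: "('x \<Rightarrow> 'a::{idom,ring_char_0}) poly"
  shows "eval_coeffs x (P * Q) = eval_coeffs x P * eval_coeffs x Q"
  by (simp add: poly_eq_poly_eq_iff[symmetric] fun_eq_iff poly_eval_coeffs)

lemma eval_coeffs_power: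
  fixes Q :: "('x \<Rightarrow> 'a::{idom,ring_char_0}) poly"
  shows "eval_coeffs x (Q ^ n) = eval_coeffs x Q ^ n"
  by (induction n) (simp_all add: eval_coeffs_mult, simp add: eval_coeffs_def)

lemma poly_var_fun_upd:
  assumes "j \<notin> S" "coeffs_in S Q"
  shows "poly Q (\<lambda>x. x j) (x(j := t)) = poly (eval_coeffs x Q) t"
  using assms(2)
proof (induction Q)
  case (pCons a Q)
  then have "a (x(j := t)) = a x"
    using assms(1) by (intro polyfun_in_cong[of a S]) (auto simp: coeffs_in_pCons)
  moreover have "poly Q (\<lambda>x. x j) (x(j := t)) = poly (eval_coeffs x Q) t"
    using pCons.IH pCons.prems coeffs_in_pCons by blast
  ultimately show ?case
    by (simp add: eval_coeffs_def map_poly_pCons del: fun_upd_apply) simp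
qed (simp add: eval_coeffs_def)

section \<open>The weak Nullstellensatz\<close>

lemma alg_closed_poly_root:
  assumes ac: "alg_closed TYPE('a::field)" and deg: "degree (p::'a poly) > 0"
  shows "\<exists>x. poly p x = 0"
proof -
  define n where "n = degree p"
  have lc: "lead_coeff p \<noteq> 0"
    using deg by auto
  obtain x where x: "x ^ n + (\<Sum>i<n. (coeff p i / lead_coeff p) * x ^ i) = 0"
    using ac[unfolded alg_closed_def, rule_format, of n "\<lambda>i. coeff p i / lead_coeff p"] deg n_def
    by auto
  have "poly p x = (\<Sum>i<n. coeff p i * x ^ i) + lead_coeff p * x ^ n"
    by (simp add: poly_altdef n_def lessThan_Suc_atMost[symmetric])
  also have "\<dots> = lead_coeff p * (x ^ n + (\<Sum>i<n. (coeff p i / lead_coeff p) * x ^ i))"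
    using lc by (simp add: algebra_simps sum_distrib_left)
  finally show ?thesis
    using x by auto
qed

lemma alg_closed_dvd_power_degree:
  assumes ac: "alg_closed TYPE('a::field)"
  shows "(p::'a poly) \<noteq> 0 \<Longrightarrow> (\<And>x. poly p x = 0 \<Longrightarrow> poly q x = 0) \<Longrightarrow> p dvd q ^ degree p"
proof (induction "degree p" arbitrary: p)
  case 0
  then show ?case
    by (simp add: is_unit_iff_degree unit_imp_dvd)
next
  case (Suc n)
  then obtain a where a: "poly p a = 0"
    using alg_closed_poly_root[OF ac, of p] by auto
  then obtain p1 where p1: "p = [:-a, 1:] * p1"
    by (metis dvdE poly_eq_0_iff_dvd)
  with Suc.prems have "p1 \<noteq> 0"
    by auto
  have "degree p = degree [:-a, 1:] + degree p1"
    unfolding p1 by (rule degree_mult_eq) (use \<open>p1 \<noteq> 0\<close> in auto)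
  with Suc.hyps(2) have "degree p1 = n"
    by simp
  moreover have "\<And>x. poly p1 x = 0 \<Longrightarrow> poly q x = 0"
    using Suc.prems p1 by auto
  ultimately have "p1 dvd q ^ n"
    using Suc.hyps(1) \<open>p1 \<noteq> 0\<close> by blast
  moreover have "[:-a, 1:] dvd q"
    using Suc.prems a by (simp add: poly_eq_0_iff_dvd)
  ultimately show ?case
    using p1 Suc.hyps(2) by (metis mult_dvd_mono power_Suc)
qed

lemma alg_closed_root_not_root:
  assumes ac: "alg_closed TYPE('a::field)" and deg: "degree F > 0"
    and eq: "smult c (G ^ degree F) = Q * F + R" and "R \<noteq> 0" and "degree R < degree (F::'a poly)"
  shows "\<exists>t. poly F t = 0 \<and> poly G t \<noteq> 0"
proof (rule ccontr)
  assume "\<not> ?thesis"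
  then have "F dvd G ^ degree F"
    using deg by (intro alg_closed_dvd_power_degree[OF ac]) auto
  then have "F dvd smult c (G ^ degree F) - Q * F"
    by (simp add: dvd_smult dvd_diff)
  then have "F dvd R"
    by (simp add: eq)
  then show False
    using dvd_imp_degree_le assms(4,5) by fastforce
qed

locale polyfun_prime_ideal =
  fixes S :: "'n set" and P :: "(('n \<Rightarrow> 'a::comm_ring_1) \<Rightarrow> 'a) set"
  assumes subset: "P \<subseteq> polyfun_in S"
    and zero_mem: "0 \<in> P"
    and add_mem: "f \<in> P \<Longrightarrow> g \<in> P \<Longrightarrow> f + g \<in> P"
    and mult_mem: "f \<in> P \<Longrightarrow> g \<in> polyfun_in S \<Longrightarrow> g * f \<in> P"
    and one_not_mem: "1 \<notin> P"
    and prime: "f \<in> polyfun_in S \<Longrightarrow> g \<in> polyfun_in S \<Longrightarrow> f * g \<in> P \<Longrightarrow> f \<in> P \<or> g \<in> P"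
begin

lemma uminus_mem: "f \<in> P \<Longrightarrow> - f \<in> P"
  using mult_mem[of f "- 1"] polyfun_in_uminus[OF polyfun_in_one, of S] by simp

lemma diff_mem: "f \<in> P \<Longrightarrow> g \<in> P \<Longrightarrow> f - g \<in> P"
  using add_mem[OF _ uminus_mem, of f g] by simp

lemma power_mem_imp_mem: "f \<in> polyfun_in S \<Longrightarrow> f ^ n \<in> P \<Longrightarrow> f \<in> P"
proof (induction n)
  case (Suc n)
  then have "f \<in> P \<or> f ^ n \<in> P"
    using prime[of f "f ^ n"] polyfun_in_power by (metis power_Suc)
  with Suc show ?case
    by blast
qed (use one_not_mem in auto)

lemma restrict: "T \<subseteq> S \<Longrightarrow> polyfun_prime_ideal T (P \<inter> polyfun_in T)"
proof
  assume T: "T \<subseteq> S"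
  show "f * g \<in> P \<inter> polyfun_in T \<Longrightarrow> f \<in> P \<inter> polyfun_in T \<or> g \<in> P \<inter> polyfun_in T"
    if "f \<in> polyfun_in T" "g \<in> polyfun_in T" for f g
    using that T prime polyfun_in_mono by blast
  show "g * f \<in> P \<inter> polyfun_in T" if "f \<in> P \<inter> polyfun_in T" "g \<in> polyfun_in T" for f g
    using that T mult_mem polyfun_in_mult polyfun_in_mono by blast
qed (use zero_mem one_not_mem polyfun_in_zero in \<open>auto intro: add_mem polyfun_in_add\<close>)

lemma poly_mem: "j \<in> S \<Longrightarrow> (\<And>m. coeff Q m \<in> P) \<Longrightarrow> poly Q (\<lambda>x. x j) \<in> P"
proof (induction Q)
  case (pCons a Q)
  then have "poly Q (\<lambda>x. x j) \<in> P"
    by (metis coeff_pCons_Suc)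
  with pCons.prems show ?case
    by (metis coeff_pCons_0 add_mem mult_mem poly_pCons polyfun_in_var)
qed (simp add: zero_mem)

end

lemma polyfun_prime_ideal_empty_zero:
  assumes "polyfun_prime_ideal {} P" "h \<in> polyfun_in {}" "h \<notin> P"
  shows "\<exists>x. (\<forall>f\<in>P. f x = 0) \<and> h x \<noteq> (0::'a::field)"
proof -
  interpret polyfun_prime_ideal "{}" P by (fact assms(1))
  obtain c where hc: "h = (\<lambda>_. c)"
    using polyfun_in_empty assms(2) by blast
  have "f x = 0" if f: "f \<in> P" for f x
  proof (rule ccontr)
    have "f \<in> polyfun_in {}"
      using f subset by blast
    then obtain a where fa: "f = (\<lambda>_. a)"
      using polyfun_in_empty by blast
    assume "f x \<noteq> 0"
    then have "(\<lambda>_. 1 / a) * f = 1"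
      using fa by (auto simp: fun_eq_iff)
    moreover have "(\<lambda>_. 1 / a) * f \<in> P"
      using mult_mem[OF f polyfun_in_const] .
    ultimately show False
      using one_not_mem by simp
  qed
  moreover have "c \<noteq> 0"
    using assms(3) zero_mem hc by (auto simp: zero_fun_def)
  ultimately show ?thesis
    using hc by auto
qed

lemma degree_eval_coeffs_le: "degree (eval_coeffs x Q) \<le> degree Q"
  by (rule degree_le) (auto simp: coeff_eval_coeffs coeff_eq_0)

lemma degree_eval_coeffs: "lead_coeff Q x \<noteq> 0 \<Longrightarrow> degree (eval_coeffs x Q) = degree Q"
  by (intro antisym degree_eval_coeffs_le le_degree) (simp add: coeff_eval_coeffs)

lemma eval_coeffs_root_not_root:
  fixes F G q r :: "('x \<Rightarrow> 'a::field_char_0) poly"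
  assumes ac: "alg_closed TYPE('a)" and "degree F > 0"
    and eq: "smult (lead_coeff F ^ k) (G ^ degree F) = F * q + r" and deg: "r = 0 \<or> degree r < degree F"
    and x_lc: "lead_coeff F x \<noteq> 0" and x_r: "coeff r m x \<noteq> 0"
  shows "\<exists>t. poly (eval_coeffs x F) t = 0 \<and> poly (eval_coeffs x G) t \<noteq> 0"
proof (rule alg_closed_root_not_root[OF ac])
  have deg_F: "degree (eval_coeffs x F) = degree F"
    using x_lc by (rule degree_eval_coeffs)
  then show "degree (eval_coeffs x F) > 0"
    using \<open>degree F > 0\<close> by simp
  show "smult (lead_coeff F x ^ k) (eval_coeffs x G ^ degree (eval_coeffs x F)) =
      eval_coeffs x q * eval_coeffs x F + eval_coeffs x r"
    using arg_cong[OF eq, of "eval_coeffs x"] deg_F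
    by (simp add: eval_coeffs_smult eval_coeffs_add eval_coeffs_mult eval_coeffs_power
        fun_power_apply mult.commute)
  show "eval_coeffs x r \<noteq> 0"
    using x_r by (auto simp: eval_coeffs_eq_0_iff)
  then have "r \<noteq> 0"
    by (auto simp: eval_coeffs_def)
  then show "degree (eval_coeffs x r) < degree (eval_coeffs x F)"
    using deg degree_eval_coeffs_le[of x r] deg_F by linarith
qed

text \<open>The Nullstellensatz is proved by induction on the variables: a prime ideal \<open>P\<close> in the variables
  \<open>insert j S\<close> restricts to the prime ideal \<open>P \<inter> polyfun_in S\<close> in the variables \<open>S\<close>, whose zeros
  (avoiding a suitable element) are extended by a last coordinate \<open>x j\<close>.\<close>

locale polyfun_prime_ideal_insert = polyfun_prime_ideal "insert j S" P
  for j :: 'n and S :: "'n set" and P :: "(('n \<Rightarrow> 'a::field_char_0) \<Rightarrow> 'a) set" +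
  assumes j_notin: "j \<notin> S"
begin

abbreviation xj :: "('n \<Rightarrow> 'a) \<Rightarrow> 'a" where
  "xj \<equiv> \<lambda>x. x j"

lemma polyfun_in_insert: "f \<in> polyfun_in S \<Longrightarrow> f \<in> polyfun_in (insert j S)"
  by (erule polyfun_in_mono) auto

lemma obtain_poly:
  assumes "f \<in> P"
  obtains Q where "coeffs_in S Q" "f = poly Q xj"
proof -
  have "f \<in> polyfun_in (insert j S)"
    using assms subset by blast
  then have "\<exists>Q. coeffs_in S Q \<and> f = poly Q xj"
    by (rule polyfun_in_insert_obtain_poly)
  then show thesis
    using that by blast
qed

lemma eval_coeffs_eq_0:
  "coeffs_in S Q \<Longrightarrow> (\<And>m. coeff Q m \<in> P) \<Longrightarrow> \<forall>f\<in>P \<inter> polyfun_in S. f x = 0 \<Longrightarrow> eval_coeffs x Q = 0"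
  unfolding eval_coeffs_eq_0_iff coeffs_in_def by blast

definition minimal_relation :: "(('n \<Rightarrow> 'a) \<Rightarrow> 'a) poly \<Rightarrow> bool" where
  "minimal_relation Q \<longleftrightarrow> coeffs_in S Q \<and> poly Q xj \<in> P \<and> (\<exists>m. coeff Q m \<notin> P) \<and>
     (\<forall>Q'. coeffs_in S Q' \<longrightarrow> poly Q' xj \<in> P \<longrightarrow> degree Q' < degree Q \<longrightarrow> (\<forall>m. coeff Q' m \<in> P))"

lemma minimal_relation_exists:
  assumes "coeffs_in S Q" "poly Q xj \<in> P" "coeff Q m \<notin> P"
  obtains Qf where "minimal_relation Qf"
proof -
  let ?rel = "\<lambda>Q. coeffs_in S Q \<and> poly Q xj \<in> P \<and> (\<exists>m. coeff Q m \<notin> P)"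
  obtain Qf where "?rel Qf" "\<And>Q'. ?rel Q' \<Longrightarrow> degree Qf \<le> degree Q'"
    using ex_has_least_nat[of ?rel Q degree] assms by blast
  then have "minimal_relation Qf"
    unfolding minimal_relation_def by (meson leD)
  then show thesis
    by (fact that)
qed

lemma minimal_relation_below:
  assumes "minimal_relation Qf" "coeffs_in S Q" "poly Q xj \<in> P" "Q = 0 \<or> degree Q < degree Qf"
  shows "coeff Q m \<in> P"
  using assms zero_mem by (auto simp: minimal_relation_def)

lemma minimal_relation_lead_coeff:
  assumes min: "minimal_relation Qf"
  shows "lead_coeff Qf \<notin> P"
proof
  assume lc: "lead_coeff Qf \<in> P"
  define Q where "Q = Qf - monom (lead_coeff Qf) (degree Qf)"
  have Qf: "coeffs_in S Qf" "poly Qf xj \<in> P"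
    using min by (auto simp: minimal_relation_def)
  have "xj ^ degree Qf * lead_coeff Qf \<in> P"
    using lc by (intro mult_mem polyfun_in_power polyfun_in_var) auto
  then have "poly Q xj \<in> P"
    using Qf(2) by (simp add: Q_def poly_monom diff_mem mult.commute)
  moreover have "coeffs_in S Q"
    unfolding Q_def using Qf(1) by (intro coeffs_in_diff coeffs_in_monom) (auto simp: coeffs_in_def)
  moreover have "Q = 0 \<or> degree Q < degree Qf"
  proof (cases "Q = 0")
    case False
    moreover have "degree Q \<le> degree Qf"
      unfolding Q_def by (intro degree_diff_le degree_monom_le) simp
    ultimately show ?thesis
      using degree_less_if_less_eqI[of Q Qf] by (simp add: Q_def)
  qed simp
  ultimately have Q: "coeff Q m \<in> P" for m
    using minimal_relation_below[OF min] by blast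
  have "coeff Qf m \<in> P" for m
    using lc Q[of m] by (cases "m = degree Qf") (auto simp: Q_def coeff_monom)
  then show False
    using min by (auto simp: minimal_relation_def)
qed

lemma minimal_relation_degree_pos:
  assumes min: "minimal_relation Qf"
  shows "degree Qf > 0"
proof (rule ccontr)
  assume "\<not> degree Qf > 0"
  then have "poly Qf xj = lead_coeff Qf"
    by (simp add: poly_altdef)
  then show False
    using min minimal_relation_lead_coeff[OF min] by (simp add: minimal_relation_def)
qed

lemma minimal_relation_remainder_mem_iff:
  assumes min: "minimal_relation Qf" and coeffs: "coeffs_in S p" "coeffs_in S q"
    and eq: "smult (lead_coeff Qf ^ k) p = Qf * q + r"
  shows "poly r xj \<in> P \<longleftrightarrow> poly p xj \<in> P"
proof -
  have Qf: "coeffs_in S Qf" "poly Qf xj \<in> P"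
    using min by (auto simp: minimal_relation_def)
  have lc: "lead_coeff Qf ^ k \<in> polyfun_in (insert j S)"
    using Qf(1) by (auto simp: coeffs_in_def intro: polyfun_in_power polyfun_in_insert)
  have p: "poly p xj \<in> polyfun_in (insert j S)"
    using coeffs(1) by (rule poly_coeffs_in_polyfun_in)
  have qQf: "poly q xj * poly Qf xj \<in> P"
    using Qf(2) coeffs(2) by (intro mult_mem poly_coeffs_in_polyfun_in)
  have r: "poly r xj = lead_coeff Qf ^ k * poly p xj - poly q xj * poly Qf xj"
    using arg_cong[OF eq, of "\<lambda>Q. poly Q xj"] by (simp add: algebra_simps)
  show ?thesis
  proof
    assume "poly r xj \<in> P"
    then have "lead_coeff Qf ^ k * poly p xj \<in> P"
      using add_mem[OF _ qQf] r by fastforce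
    then show "poly p xj \<in> P"
      using prime[OF lc p] power_mem_imp_mem minimal_relation_lead_coeff[OF min] Qf(1)
      by (metis coeffs_in_def polyfun_in_insert)
  next
    assume "poly p xj \<in> P"
    then show "poly r xj \<in> P"
      unfolding r using diff_mem[OF mult_mem[OF _ lc] qQf] by blast
  qed
qed

lemma minimal_relation_vanishes:
  assumes min: "minimal_relation Qf" and x: "\<forall>f\<in>P \<inter> polyfun_in S. f x = 0"
    and lc: "lead_coeff Qf x \<noteq> 0" and t: "poly (eval_coeffs x Qf) t = 0" and "p \<in> P"
  shows "p (x(j := t)) = 0"
proof -
  obtain Qp where Qp: "coeffs_in S Qp" "p = poly Qp xj"
    using \<open>p \<in> P\<close> by (rule obtain_poly)
  have Qf: "coeffs_in S Qf" "Qf \<noteq> 0"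
    using min minimal_relation_degree_pos[OF min] by (auto simp: minimal_relation_def)
  obtain k q r where qr: "coeffs_in S q" "coeffs_in S r"
    and eq: "smult (lead_coeff Qf ^ k) Qp = Qf * q + r" and deg: "r = 0 \<or> degree r < degree Qf"
    using pseudo_division_coeffs_in[OF Qp(1) Qf] .
  have "poly r xj \<in> P"
    using minimal_relation_remainder_mem_iff[OF min Qp(1) qr(1) eq] Qp(2) \<open>p \<in> P\<close> by simp
  then have "eval_coeffs x r = 0"
    using minimal_relation_below[OF min qr(2) _ deg] qr(2) x by (intro eval_coeffs_eq_0)
  then have "smult (lead_coeff Qf x ^ k) (eval_coeffs x Qp) = eval_coeffs x Qf * eval_coeffs x q"
    using arg_cong[OF eq, of "eval_coeffs x"]
    by (simp add: eval_coeffs_smult eval_coeffs_add eval_coeffs_mult fun_power_apply)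
  then have "lead_coeff Qf x ^ k * poly (eval_coeffs x Qp) t = 0"
    using t by (metis mult_zero_left poly_mult poly_smult)
  then show ?thesis
    using lc Qp poly_var_fun_upd[OF j_notin Qp(1)] by simp
qed

lemma minimal_relation_divide_power:
  assumes min: "minimal_relation Qf" and Qg: "coeffs_in S Qg" "poly Qg xj \<notin> P"
  obtains k q r m where "coeffs_in S q" "coeffs_in S r"
    "smult (lead_coeff Qf ^ k) (Qg ^ degree Qf) = Qf * q + r" "r = 0 \<or> degree r < degree Qf"
    "coeff r m \<notin> P"
proof -
  have Qf: "coeffs_in S Qf" "Qf \<noteq> 0"
    using min minimal_relation_degree_pos[OF min] by (auto simp: minimal_relation_def)
  obtain k q r where qr: "coeffs_in S q" "coeffs_in S r"
    and eq: "smult (lead_coeff Qf ^ k) (Qg ^ degree Qf) = Qf * q + r"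
    and deg: "r = 0 \<or> degree r < degree Qf"
    using pseudo_division_coeffs_in[OF coeffs_in_power[OF Qg(1)] Qf] .
  have "poly Qg xj \<in> polyfun_in (insert j S)"
    using Qg(1) by (rule poly_coeffs_in_polyfun_in)
  then have "poly Qg xj ^ degree Qf \<notin> P"
    using Qg(2) power_mem_imp_mem by blast
  then have "poly r xj \<notin> P"
    using minimal_relation_remainder_mem_iff[OF min coeffs_in_power[OF Qg(1)] qr(1) eq]
    by (simp add: poly_power)
  then obtain m where "coeff r m \<notin> P"
    using poly_mem[of j r] by blast
  with qr eq deg show thesis
    by (rule that)
qed

context
  fixes g :: "('n \<Rightarrow> 'a) \<Rightarrow> 'a"
  assumes IH: "\<And>h. h \<in> polyfun_in S \<Longrightarrow> h \<notin> P \<Longrightarrow> \<exists>x. (\<forall>f\<in>P \<inter> polyfun_in S. f x = 0) \<and> h x \<noteq> 0"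
    and g: "g \<in> polyfun_in (insert j S)" "g \<notin> P"
begin

lemma zero_avoiding_no_relation:
  assumes no_relation: "\<And>Q m. coeffs_in S Q \<Longrightarrow> poly Q xj \<in> P \<Longrightarrow> coeff Q m \<in> P"
  shows "\<exists>x. (\<forall>f\<in>P. f x = 0) \<and> g x \<noteq> 0"
proof -
  obtain Qg where Qg: "coeffs_in S Qg" "g = poly Qg xj"
    using polyfun_in_insert_obtain_poly[OF g(1)] by blast
  obtain m where "coeff Qg m \<notin> P"
    using g(2) Qg poly_mem by blast
  then obtain x where x: "\<forall>f\<in>P \<inter> polyfun_in S. f x = 0" "coeff Qg m x \<noteq> 0"
    using IH Qg(1) by (meson coeffs_in_def)
  then have "eval_coeffs x Qg \<noteq> 0"
    by (auto simp: eval_coeffs_eq_0_iff)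
  then have "finite {t. poly (eval_coeffs x Qg) t = 0}"
    by (rule poly_roots_finite)
  then obtain t where t: "poly (eval_coeffs x Qg) t \<noteq> 0"
    using ex_new_if_finite[OF infinite_UNIV_char_0] by blast
  have "f (x(j := t)) = 0" if "f \<in> P" for f
  proof -
    obtain Qf where "coeffs_in S Qf" "f = poly Qf xj"
      using \<open>f \<in> P\<close> by (rule obtain_poly)
    with that x(1) show ?thesis
      using no_relation eval_coeffs_eq_0 poly_var_fun_upd[OF j_notin] by (metis poly_0)
  qed
  moreover have "g (x(j := t)) \<noteq> 0"
    using t Qg poly_var_fun_upd[OF j_notin Qg(1)] by simp
  ultimately show ?thesis
    by blast
qed

text \<open>The point is built over a zero \<open>x\<close> of \<open>P \<inter> polyfun_in S\<close> at which the leading coefficient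
  of the minimal relation does not vanish; its last coordinate is a root of the specialised minimal
  relation that is not a root of the specialised \<open>g\<close>. Such a root exists because otherwise the
  specialised relation would divide a power of \<open>g\<close>, hence the specialised pseudo-remainder of that
  power, whose degree is smaller. All of \<open>P\<close> vanishes there since, by minimality, pseudo-remainders
  of elements of \<open>P\<close> have their coefficients in \<open>P \<inter> polyfun_in S\<close>.\<close>

lemma zero_avoiding_minimal_relation:
  assumes ac: "alg_closed TYPE('a)" and min: "minimal_relation Qf"
  shows "\<exists>x. (\<forall>f\<in>P. f x = 0) \<and> g x \<noteq> 0"
proof -
  obtain Qg where Qg: "coeffs_in S Qg" "g = poly Qg xj"
    using polyfun_in_insert_obtain_poly[OF g(1)] by blast
  have g_notin: "poly Qg xj \<notin> P"
    using g(2) Qg(2) by simp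
  obtain k q r m where qr: "coeffs_in S q" "coeffs_in S r"
    and eq: "smult (lead_coeff Qf ^ k) (Qg ^ degree Qf) = Qf * q + r"
    and deg: "r = 0 \<or> degree r < degree Qf" and m: "coeff r m \<notin> P"
    by (rule minimal_relation_divide_power[OF min Qg(1) g_notin]) (rule that)
  have "coeffs_in S Qf"
    using min by (simp add: minimal_relation_def)
  then have lc: "lead_coeff Qf \<in> polyfun_in S" "coeff r m \<in> polyfun_in S"
    using qr(2) by (auto simp: coeffs_in_def)
  then have "lead_coeff Qf * coeff r m \<notin> P"
    using prime[OF polyfun_in_insert[OF lc(1)] polyfun_in_insert[OF lc(2)]] m
      minimal_relation_lead_coeff[OF min] by blast
  then obtain x where x: "\<forall>f\<in>P \<inter> polyfun_in S. f x = 0" "(lead_coeff Qf * coeff r m) x \<noteq> 0"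
    using IH[OF polyfun_in_mult[OF lc]] by blast
  then have x_lc: "lead_coeff Qf x \<noteq> 0" and x_r: "coeff r m x \<noteq> 0"
    by auto
  obtain t where t: "poly (eval_coeffs x Qf) t = 0" "poly (eval_coeffs x Qg) t \<noteq> 0"
    using eval_coeffs_root_not_root[OF ac minimal_relation_degree_pos[OF min] eq deg x_lc x_r] by blast
  have "\<forall>f\<in>P. f (x(j := t)) = 0"
    using minimal_relation_vanishes[OF min x(1) x_lc t(1)] by blast
  moreover have "g (x(j := t)) \<noteq> 0"
    using t(2) Qg poly_var_fun_upd[OF j_notin Qg(1)] by simp
  ultimately show ?thesis
    by blast
qed

lemma zero_avoiding:
  assumes "alg_closed TYPE('a)"
  shows "\<exists>x. (\<forall>f\<in>P. f x = 0) \<and> g x \<noteq> 0"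
proof (cases "\<exists>Q m. coeffs_in S Q \<and> poly Q xj \<in> P \<and> coeff Q m \<notin> P")
  case True
  then obtain Q m where "coeffs_in S Q" "poly Q xj \<in> P" "coeff Q m \<notin> P"
    by blast
  then obtain Qf where "minimal_relation Qf"
    by (rule minimal_relation_exists)
  then show ?thesis
    by (rule zero_avoiding_minimal_relation[OF assms])
next
  case False
  then show ?thesis
    by (intro zero_avoiding_no_relation) blast
qed

end

end

theorem weak_nullstellensatz:
  fixes P :: "(('n \<Rightarrow> 'a::field_char_0) \<Rightarrow> 'a) set"
  assumes ac: "alg_closed TYPE('a)" and "finite S"
  shows "polyfun_prime_ideal S P \<Longrightarrow> h \<in> polyfun_in S \<Longrightarrow> h \<notin> P \<Longrightarrow> \<exists>x. (\<forall>f\<in>P. f x = 0) \<and> h x \<noteq> 0"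
  using \<open>finite S\<close>
proof (induction S arbitrary: P h rule: finite_induct)
  case empty
  then show ?case
    by (rule polyfun_prime_ideal_empty_zero)
next
  case (insert j S)
  interpret polyfun_prime_ideal_insert j S P
    using insert.prems(1) insert.hyps(2) by (simp add: polyfun_prime_ideal_insert_def
        polyfun_prime_ideal_insert_axioms_def)
  have "polyfun_prime_ideal S (P \<inter> polyfun_in S)"
    by (rule restrict) auto
  then have "\<exists>x. (\<forall>f\<in>P \<inter> polyfun_in S. f x = 0) \<and> h x \<noteq> 0"
    if "h \<in> polyfun_in S" "h \<notin> P" for h
    using insert.IH that by blast
  then show ?case
    using zero_avoiding[OF _ insert.prems(2,3) ac] by blast
qed

lemma primeideal_S_ring_polyfun_prime_ideal:
  fixes \<Omega> :: "(('n::finite \<Rightarrow> 'a::field) \<Rightarrow> 'a) set"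
  assumes "primeideal \<Omega> S_ring"
  shows "polyfun_prime_ideal UNIV \<Omega>"
proof -
  interpret primeideal \<Omega> S_ring
    by (fact assms)
  let ?S = "S_ring :: (('n \<Rightarrow> 'a) \<Rightarrow> 'a) ring"
  have S_ring: "carrier ?S = polyfun_in UNIV" "f \<otimes>\<^bsub>?S\<^esub> g = f * g" "f \<oplus>\<^bsub>?S\<^esub> g = f + g"
    "\<one>\<^bsub>?S\<^esub> = 1" "\<zero>\<^bsub>?S\<^esub> = 0" for f g
    by (simp_all add: S_ring_def polyfun_in_UNIV plus_fun_def times_fun_def one_fun_def zero_fun_def)
  show ?thesis
  proof
    show "\<Omega> \<subseteq> polyfun_in UNIV"
      using a_subset S_ring(1) by simp
    show "0 \<in> \<Omega>"
      using additive_subgroup.zero_closed[OF is_additive_subgroup] S_ring(5) by simp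
    show "1 \<notin> \<Omega>"
      using one_imp_carrier I_notcarr S_ring(4) by auto
  qed (use additive_subgroup.a_closed[OF is_additive_subgroup] I_l_closed I_prime S_ring in auto)
qed

lemma primeideal_S_ring_zero:
  fixes \<Omega> :: "(('n::finite \<Rightarrow> 'a::field_char_0) \<Rightarrow> 'a) set"
  assumes "alg_closed TYPE('a)" "primeideal \<Omega> S_ring"
  shows "zero_set \<Omega> \<noteq> {}"
proof -
  have "polyfun_prime_ideal UNIV \<Omega>"
    using assms(2) by (rule primeideal_S_ring_polyfun_prime_ideal)
  then have "\<exists>x. (\<forall>f\<in>\<Omega>. f x = 0) \<and> 1 x \<noteq> (0::'a)"
    using weak_nullstellensatz[OF assms(1) finite_UNIV] polyfun_in_one polyfun_prime_ideal.one_not_mem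
    by blast
  then show ?thesis
    by (auto simp: zero_set_def)
qed

lemma strongly_dominant_obtain_zero:
  fixes \<Omega> :: "(('n::finite \<Rightarrow> 'a::field_char_0) \<Rightarrow> 'a) set"
  assumes "alg_closed TYPE('a)" "primeideal \<Omega> S_ring" "strongly_dominant Rpos cor \<Omega>"
  obtains \<xi> where "\<xi> \<in> zero_set \<Omega>" "\<xi> \<in> dominant_integral Rpos cor"
proof -
  have "zero_set \<Omega> \<inter> dominant_integral Rpos cor \<noteq> {}"
  proof
    assume "zero_set \<Omega> \<inter> dominant_integral Rpos cor = {}"
    then have "\<forall>\<xi>\<in>zero_set \<Omega>. (1::'a) = 0"
      using assms(3) polyfun.pf_const[of 1]
      unfolding strongly_dominant_def zariski_dense_in_def by blast
    then show False
      using primeideal_S_ring_zero[OF assms(1,2)] by auto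
  qed
  then show thesis
    using that by blast
qed

section \<open>Reflections and the Weyl group\<close>

lemma pair_add_left: "pair (\<lambda>i. x i + y i) H = pair x H + pair y H"
  by (simp add: pair_def algebra_simps sum.distrib)

lemma pair_diff_left: "pair (\<lambda>i. x i - y i) H = pair x H - pair y H"
  by (simp add: pair_def algebra_simps sum_subtractf)

lemma pair_scale_left: "pair (\<lambda>i. c * x i) H = c * pair x H"
  by (simp add: pair_def sum_distrib_left mult.assoc)

lemma pair_scale_left': "pair (\<lambda>i. x i * c) H = pair x H * c"
  using pair_scale_left[of c x H] by (simp add: mult.commute)

lemma pair_uminus_left: "pair (\<lambda>i. - x i) H = - pair x H"
  by (simp add: pair_def sum_negf)

lemma pair_sum_left: "pair (\<lambda>i. \<Sum>\<alpha>\<in>A. c \<alpha> * \<alpha> i) H = (\<Sum>\<alpha>\<in>A. c \<alpha> * pair \<alpha> H)"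
  by (simp add: pair_def sum_distrib_left sum_distrib_right mult.assoc sum.swap[of _ A])

lemma pair_diff_right: "pair x (\<lambda>i. a i - b i) = pair x a - pair x b"
  by (simp add: pair_def algebra_simps sum_subtractf)

lemma pair_scale_right: "pair x (\<lambda>i. c * a i) = c * pair x a"
  by (simp add: pair_def sum_distrib_left mult.left_commute)

lemma pair_scale_right': "pair x (\<lambda>i. a i * c) = pair x a * c"
  using pair_scale_right[of x c a] by (simp add: mult.commute)

lemma pair_uminus_right: "pair x (\<lambda>i. - H i) = - pair x H"
  by (simp add: pair_def sum_negf)

lemmas pair_linear =
  pair_add_left pair_diff_left pair_scale_left pair_scale_left' pair_uminus_left
  pair_diff_right pair_scale_right pair_scale_right' pair_uminus_right

lemma reflection_apply: "reflection cor \<alpha> \<xi> i = \<xi> i - pair \<xi> (cor \<alpha>) * \<alpha> i"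
  by (simp add: reflection_def)

lemma pair_reflection_left:
  "pair (reflection cor \<alpha> \<xi>) H = pair \<xi> H - pair \<xi> (cor \<alpha>) * pair \<alpha> H"
  by (simp add: reflection_def pair_linear)

lemma reflection_reflection:
  "pair \<alpha> (cor \<alpha>) = 2 \<Longrightarrow> reflection cor \<alpha> (reflection cor \<alpha> \<xi>) = \<xi>"
  by (rule ext) (simp add: reflection_apply pair_reflection_left algebra_simps)

lemma reflection_add:
  "reflection cor \<alpha> (\<lambda>i. x i + y i) = (\<lambda>i. reflection cor \<alpha> x i + reflection cor \<alpha> y i)"
  by (rule ext) (simp add: reflection_apply pair_linear algebra_simps)

lemma reflection_diff_scale:
  "reflection cor \<alpha> (\<lambda>i. x i - c * y i) = (\<lambda>i. reflection cor \<alpha> x i - c * reflection cor \<alpha> y i)"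
  by (rule ext) (simp add: reflection_apply pair_linear algebra_simps)

lemma reflection_uminus: "reflection cor \<alpha> (\<lambda>i. - x i) = (\<lambda>i. - reflection cor \<alpha> x i)"
  by (rule ext) (simp add: reflection_apply pair_linear)

context
  fixes R :: "('n::finite \<Rightarrow> 'a::field_char_0) set" and cor
  assumes rs: "root_system R cor"
begin

lemma root_system_finite: "finite R"
  using rs by (simp add: root_system_def)

lemma root_system_nonzero: "\<alpha> \<in> R \<Longrightarrow> \<alpha> \<noteq> (\<lambda>i. 0)"
  using rs by (auto simp: root_system_def)

lemma root_system_span: "\<exists>c. \<xi> = (\<lambda>i. \<Sum>\<alpha>\<in>R. c \<alpha> * \<alpha> i)"
  using rs by (simp add: root_system_def)

lemma root_system_pair_coroot: "\<alpha> \<in> R \<Longrightarrow> pair \<alpha> (cor \<alpha>) = 2"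
  using rs by (simp add: root_system_def)

lemma root_system_reflection: "\<alpha> \<in> R \<Longrightarrow> \<beta> \<in> R \<Longrightarrow> reflection cor \<alpha> \<beta> \<in> R"
  using rs by (simp add: root_system_def)

lemma root_system_pair_Ints: "\<alpha> \<in> R \<Longrightarrow> \<beta> \<in> R \<Longrightarrow> pair \<beta> (cor \<alpha>) \<in> \<int>"
  using rs by (simp add: root_system_def)

lemma root_system_uminus: "\<gamma> \<in> R \<Longrightarrow> (\<lambda>i. - \<gamma> i) \<in> R"
  using root_system_reflection[of \<gamma> \<gamma>]
  by (simp add: reflection_def root_system_pair_coroot)

lemma root_system_no_progression:
  assumes "\<gamma> \<in> R" "c \<noteq> 0"
  shows "\<exists>m::nat. (\<lambda>i. \<beta> i + of_nat m * c * \<gamma> i) \<notin> R"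
proof (rule ccontr)
  assume "\<not> ?thesis"
  then have "range (\<lambda>m::nat. \<lambda>i. \<beta> i + of_nat m * c * \<gamma> i) \<subseteq> R"
    by auto
  moreover obtain i where "\<gamma> i \<noteq> 0"
    using root_system_nonzero[OF assms(1)] by auto
  then have "inj (\<lambda>m::nat. \<lambda>i. \<beta> i + of_nat m * c * \<gamma> i)"
    using assms(2) by (auto intro!: injI dest!: fun_cong[where x = i])
  ultimately show False
    using root_system_finite finite_subset finite_imageD infinite_UNIV_nat by metis
qed

text \<open>The coroot is determined by the root: a linear form taking the value 2 on \<open>\<gamma>\<close> whose
  reflection preserves \<open>R\<close> agrees with \<open>cor \<gamma>\<close>. Their difference \<open>\<phi>\<close> vanishes on \<open>\<gamma>\<close>, and composing
  the two reflections gives the translation \<open>\<beta> \<mapsto> \<beta> + \<phi> \<beta> \<gamma>\<close> of \<open>R\<close>, so \<open>\<phi>\<close> vanishes on the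
  finite set \<open>R\<close>, which spans.\<close>

lemma coroot_unique:
  assumes \<gamma>: "\<gamma> \<in> R" and c2: "pair \<gamma> c = 2"
    and c_refl: "\<And>\<beta>. \<beta> \<in> R \<Longrightarrow> (\<lambda>i. \<beta> i - pair \<beta> c * \<gamma> i) \<in> R"
  shows "pair \<xi> c = pair \<xi> (cor \<gamma>)"
proof -
  define \<phi> where "\<phi> x = pair x c - pair x (cor \<gamma>)" for x
  have \<phi>_shift: "\<phi> (\<lambda>i. x i + a * \<gamma> i) = \<phi> x" for x a
    using c2 root_system_pair_coroot[OF \<gamma>] by (simp add: \<phi>_def pair_linear algebra_simps)
  have translate: "(\<lambda>i. x i + \<phi> x * \<gamma> i) \<in> R" if "x \<in> R" for x
  proof -
    have "reflection cor \<gamma> (\<lambda>i. x i - pair x c * \<gamma> i) = (\<lambda>i. x i + \<phi> x * \<gamma> i)"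
      using root_system_pair_coroot[OF \<gamma>]
      by (intro ext) (simp add: reflection_apply \<phi>_def pair_linear algebra_simps)
    then show ?thesis
      using root_system_reflection[OF \<gamma> c_refl[OF that]] by simp
  qed
  have progression: "(\<lambda>i. \<beta> i + of_nat m * \<phi> \<beta> * \<gamma> i) \<in> R" if "\<beta> \<in> R" for \<beta> m
  proof (induction m)
    case (Suc m)
    have "\<phi> (\<lambda>i. \<beta> i + of_nat m * \<phi> \<beta> * \<gamma> i) = \<phi> \<beta>"
      using \<phi>_shift[of \<beta> "of_nat m * \<phi> \<beta>"] by (simp add: mult.assoc)
    with translate[OF Suc] show ?case
      by (simp add: algebra_simps)
  qed (simp add: that)
  have "\<phi> \<beta> = 0" if "\<beta> \<in> R" for \<beta>
    using root_system_no_progression[OF \<gamma>] progression[OF that] by blast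
  moreover obtain a where "\<xi> = (\<lambda>i. \<Sum>\<alpha>\<in>R. a \<alpha> * \<alpha> i)"
    using root_system_span by blast
  then have "\<phi> \<xi> = (\<Sum>\<alpha>\<in>R. a \<alpha> * \<phi> \<alpha>)"
    by (simp only: \<phi>_def pair_sum_left) (simp add: right_diff_distrib sum_subtractf)
  ultimately show ?thesis
    by (simp add: \<phi>_def)
qed

lemma pair_coroot_uminus:
  assumes \<gamma>: "\<gamma> \<in> R"
  shows "pair \<xi> (cor (\<lambda>i. - \<gamma> i)) = - pair \<xi> (cor \<gamma>)"
proof -
  have "pair \<xi> (\<lambda>i. - cor \<gamma> i) = pair \<xi> (cor (\<lambda>i. - \<gamma> i))"
  proof (rule coroot_unique)
    show "(\<lambda>i. - \<gamma> i) \<in> R"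
      using \<gamma> by (rule root_system_uminus)
    show "pair (\<lambda>i. - \<gamma> i) (\<lambda>i. - cor \<gamma> i) = 2"
      using root_system_pair_coroot[OF \<gamma>] by (simp add: pair_linear)
    show "(\<lambda>i. \<beta> i - pair \<beta> (\<lambda>i. - cor \<gamma> i) * - \<gamma> i) \<in> R" if "\<beta> \<in> R" for \<beta>
      using root_system_reflection[OF \<gamma> that] by (simp add: reflection_def pair_linear)
  qed
  then show ?thesis
    by (simp add: pair_linear)
qed

lemma pair_reflection_coroot_reflection:
  assumes \<beta>: "\<beta> \<in> R" and \<gamma>: "\<gamma> \<in> R"
  shows "pair (reflection cor \<beta> \<eta>) (cor (reflection cor \<beta> \<gamma>)) = pair \<eta> (cor \<gamma>)"
proof -
  let ?s = "reflection cor \<beta>"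
  define c where "c = (\<lambda>i. cor \<gamma> i - pair \<beta> (cor \<gamma>) * cor \<beta> i)"
  have pair_c: "pair (?s \<xi>) (cor \<gamma>) = pair \<xi> c" for \<xi>
    by (simp add: c_def pair_linear pair_reflection_left mult.commute)
  have ss: "?s (?s \<xi>) = \<xi>" for \<xi>
    using root_system_pair_coroot[OF \<beta>] by (rule reflection_reflection)
  have "pair \<xi> c = pair \<xi> (cor (?s \<gamma>))" for \<xi>
  proof (rule coroot_unique)
    show "?s \<gamma> \<in> R"
      using root_system_reflection[OF \<beta> \<gamma>] .
    show "pair (?s \<gamma>) c = 2"
      using pair_c[of "?s \<gamma>"] ss root_system_pair_coroot[OF \<gamma>] by simp
    show "(\<lambda>i. \<delta> i - pair \<delta> c * ?s \<gamma> i) \<in> R" if "\<delta> \<in> R" for \<delta>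
    proof -
      have "reflection cor \<gamma> (?s \<delta>) = (\<lambda>i. ?s \<delta> i - pair \<delta> c * \<gamma> i)"
        by (rule ext) (simp add: reflection_apply pair_c)
      then have "?s (reflection cor \<gamma> (?s \<delta>)) = (\<lambda>i. \<delta> i - pair \<delta> c * ?s \<gamma> i)"
        by (simp add: reflection_diff_scale ss)
      then show ?thesis
        using root_system_reflection \<beta> \<gamma> that by metis
    qed
  qed
  then have "pair (?s \<eta>) (cor (?s \<gamma>)) = pair (?s (?s \<eta>)) (cor \<gamma>)"
    by (simp add: pair_c)
  then show ?thesis
    by (simp add: ss)
qed

lemma weyl_group_add: "w \<in> weyl_group R cor \<Longrightarrow> w (\<lambda>i. x i + y i) = (\<lambda>i. w x i + w y i)"
  by (induction w arbitrary: x y rule: weyl_group.induct) (simp_all add: reflection_add)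

lemma weyl_group_bij: "w \<in> weyl_group R cor \<Longrightarrow> bij w"
proof (induction w rule: weyl_group.induct)
  case (weyl_step \<alpha> w)
  have "bij (reflection cor \<alpha>)"
    using reflection_reflection[where cor = cor, OF root_system_pair_coroot[OF weyl_step.hyps(1)]]
    by (rule involuntory_imp_bij)
  then show ?case
    using weyl_step.IH by (rule bij_comp[rotated])
qed (simp add: bij_id[unfolded id_def])

lemma weyl_group_root: "w \<in> weyl_group R cor \<Longrightarrow> \<alpha> \<in> R \<Longrightarrow> w \<alpha> \<in> R"
  by (induction w rule: weyl_group.induct) (simp_all add: root_system_reflection)

lemma weyl_group_pair_coroot:
  "w \<in> weyl_group R cor \<Longrightarrow> \<alpha> \<in> R \<Longrightarrow> pair (w \<xi>) (cor (w \<alpha>)) = pair \<xi> (cor \<alpha>)"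
  by (induction w arbitrary: \<xi> rule: weyl_group.induct)
    (simp_all add: pair_reflection_coroot_reflection weyl_group_root)

lemma pair_dot_inv_coroot:
  assumes "w \<in> weyl_group R cor" "\<alpha> \<in> R"
  shows "pair (dot Rpos (inv_into UNIV w) \<xi>) (cor \<alpha>) =
    pair \<xi> (cor (w \<alpha>)) + pair (rho Rpos) (cor (w \<alpha>)) - pair (rho Rpos) (cor \<alpha>)"
proof -
  have "w (inv_into UNIV w \<eta>) = \<eta>" for \<eta>
    using weyl_group_bij[OF assms(1)] by (simp add: bij_def surj_f_inv_f)
  then have "pair (inv_into UNIV w \<eta>) (cor \<alpha>) = pair \<eta> (cor (w \<alpha>))" for \<eta>
    using weyl_group_pair_coroot[OF assms] by metis
  then show ?thesis
    by (simp add: dot_def pair_linear)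
qed

end

section \<open>Positive systems\<close>

lemma positive_system_subset: "positive_system R Rpos \<Longrightarrow> Rpos \<subseteq> R"
  by (simp add: positive_system_def)

lemma int_coords_diff:
  fixes \<Delta> :: "('n \<Rightarrow> 'a::{comm_ring_1,ring_char_0}) set"
  assumes indep: "\<And>c. (\<lambda>i. \<Sum>\<delta>\<in>\<Delta>. c \<delta> * \<delta> i) = (\<lambda>i. 0) \<Longrightarrow> \<forall>\<delta>\<in>\<Delta>. c \<delta> = 0"
    and x: "(\<lambda>i. \<gamma> i - of_int a * \<alpha> i) = (\<lambda>i. \<Sum>\<delta>\<in>\<Delta>. of_int (kx \<delta>) * \<delta> i)"
    and \<gamma>: "\<gamma> = (\<lambda>i. \<Sum>\<delta>\<in>\<Delta>. of_int (k\<gamma> \<delta>) * \<delta> i)" and \<alpha>: "\<alpha> = (\<lambda>i. \<Sum>\<delta>\<in>\<Delta>. of_int (k\<alpha> \<delta>) * \<delta> i)"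
    and "\<delta> \<in> \<Delta>"
  shows "kx \<delta> = k\<gamma> \<delta> - a * k\<alpha> \<delta>"
proof -
  have "(\<Sum>\<delta>\<in>\<Delta>. (of_int (kx \<delta>) - of_int (k\<gamma> \<delta> - a * k\<alpha> \<delta>)) * \<delta> i) = 0" for i
  proof -
    have "(\<Sum>\<delta>\<in>\<Delta>. (of_int (kx \<delta>) - of_int (k\<gamma> \<delta> - a * k\<alpha> \<delta>)) * \<delta> i) =
        (\<Sum>\<delta>\<in>\<Delta>. of_int (kx \<delta>) * \<delta> i) -
        ((\<Sum>\<delta>\<in>\<Delta>. of_int (k\<gamma> \<delta>) * \<delta> i) - of_int a * (\<Sum>\<delta>\<in>\<Delta>. of_int (k\<alpha> \<delta>) * \<delta> i))"
      by (simp add: algebra_simps sum_subtractf sum_distrib_left sum.distrib)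
    also have "\<dots> = 0"
      using fun_cong[OF x, of i] fun_cong[OF \<gamma>, of i] fun_cong[OF \<alpha>, of i] by simp
    finally show ?thesis .
  qed
  then have "of_int (kx \<delta>) - of_int (k\<gamma> \<delta> - a * k\<alpha> \<delta>) = (0::'a)"
    using indep[of "\<lambda>\<delta>. of_int (kx \<delta>) - of_int (k\<gamma> \<delta> - a * k\<alpha> \<delta>)"] \<open>\<delta> \<in> \<Delta>\<close> by auto
  then show ?thesis
    by (simp only: right_minus_eq of_int_eq_iff)
qed

lemma positive_system_obtain_coords:
  fixes R Rpos :: "('n::finite \<Rightarrow> 'a::field_char_0) set"
  assumes rs: "root_system R cor" and ps: "positive_system R Rpos"
  obtains \<Delta> and k :: "('n \<Rightarrow> 'a) \<Rightarrow> ('n \<Rightarrow> 'a) \<Rightarrow> int" where "finite \<Delta>"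
    and "\<And>\<beta>. \<beta> \<in> R \<Longrightarrow> \<beta> = (\<lambda>i. \<Sum>\<delta>\<in>\<Delta>. of_int (k \<beta> \<delta>) * \<delta> i)"
    and "\<And>\<beta> \<delta>. \<beta> \<in> Rpos \<Longrightarrow> \<delta> \<in> \<Delta> \<Longrightarrow> k \<beta> \<delta> \<ge> 0"
    and "\<And>\<beta> \<delta>. \<beta> \<in> R \<Longrightarrow> \<beta> \<notin> Rpos \<Longrightarrow> \<delta> \<in> \<Delta> \<Longrightarrow> k \<beta> \<delta> \<le> 0"
    and "\<And>\<gamma> \<alpha> a \<delta>. \<gamma> \<in> R \<Longrightarrow> \<alpha> \<in> R \<Longrightarrow> (\<lambda>i. \<gamma> i - of_int a * \<alpha> i) \<in> R \<Longrightarrow> \<delta> \<in> \<Delta> \<Longrightarrow>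
      k (\<lambda>i. \<gamma> i - of_int a * \<alpha> i) \<delta> = k \<gamma> \<delta> - a * k \<alpha> \<delta>"
proof -
  obtain \<Delta> where \<Delta>: "\<Delta> \<subseteq> R"
    and indep: "\<And>c. (\<lambda>i. \<Sum>\<delta>\<in>\<Delta>. c \<delta> * \<delta> i) = (\<lambda>i. 0) \<Longrightarrow> \<forall>\<delta>\<in>\<Delta>. c \<delta> = 0"
    and coords: "\<forall>\<beta>\<in>R. \<exists>k::('n \<Rightarrow> 'a) \<Rightarrow> int. \<beta> = (\<lambda>i. \<Sum>\<delta>\<in>\<Delta>. of_int (k \<delta>) * \<delta> i) \<and>
        (((\<forall>\<delta>\<in>\<Delta>. k \<delta> \<ge> 0) \<and> \<beta> \<in> Rpos) \<or> ((\<forall>\<delta>\<in>\<Delta>. k \<delta> \<le> 0) \<and> \<beta> \<notin> Rpos))"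
    using ps unfolding positive_system_def by blast
  obtain k where k: "\<And>\<beta>. \<beta> \<in> R \<Longrightarrow> \<beta> = (\<lambda>i. \<Sum>\<delta>\<in>\<Delta>. of_int (k \<beta> \<delta>) * \<delta> i) \<and>
        (((\<forall>\<delta>\<in>\<Delta>. k \<beta> \<delta> \<ge> 0) \<and> \<beta> \<in> Rpos) \<or> ((\<forall>\<delta>\<in>\<Delta>. k \<beta> \<delta> \<le> 0) \<and> \<beta> \<notin> Rpos))"
    using bchoice[OF coords] by blast
  then have repr: "\<beta> = (\<lambda>i. \<Sum>\<delta>\<in>\<Delta>. of_int (k \<beta> \<delta>) * \<delta> i)" if "\<beta> \<in> R" for \<beta>
    using that by blast
  have diff: "k (\<lambda>i. \<gamma> i - of_int a * \<alpha> i) \<delta> = k \<gamma> \<delta> - a * k \<alpha> \<delta>"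
    if "\<gamma> \<in> R" "\<alpha> \<in> R" "(\<lambda>i. \<gamma> i - of_int a * \<alpha> i) \<in> R" "\<delta> \<in> \<Delta>" for \<gamma> \<alpha> a \<delta>
    using int_coords_diff[OF indep repr[OF that(3)] repr[OF that(1)] repr[OF that(2)] that(4)] .
  have "finite \<Delta>"
    using \<Delta> root_system_finite[OF rs] finite_subset by blast
  then show thesis
    using that[of \<Delta> k] diff k positive_system_subset[OF ps] by blast
qed

locale root_height =
  fixes R Rpos :: "('n::finite \<Rightarrow> 'a::field_char_0) set" and cor and ht :: "('n \<Rightarrow> 'a) \<Rightarrow> int"
  assumes rs: "root_system R cor" and positive_subset: "Rpos \<subseteq> R"
    and height_pos: "\<And>\<gamma>. \<gamma> \<in> Rpos \<Longrightarrow> ht \<gamma> > 0"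
    and height_neg: "\<And>\<gamma>. \<gamma> \<in> R \<Longrightarrow> \<gamma> \<notin> Rpos \<Longrightarrow> ht \<gamma> < 0"
    and height_diff: "\<And>\<gamma> \<alpha> a. \<gamma> \<in> R \<Longrightarrow> \<alpha> \<in> R \<Longrightarrow> (\<lambda>i. \<gamma> i - of_int a * \<alpha> i) \<in> R \<Longrightarrow>
      ht (\<lambda>i. \<gamma> i - of_int a * \<alpha> i) = ht \<gamma> - a * ht \<alpha>"
begin

lemma height_uminus:
  assumes "\<gamma> \<in> R"
  shows "ht (\<lambda>i. - \<gamma> i) = - ht \<gamma>"
proof -
  have "(\<lambda>i. - \<gamma> i) = (\<lambda>i. \<gamma> i - of_int 2 * \<gamma> i)"
    by (rule ext) simp
  then show ?thesis
    using height_diff[of \<gamma> \<gamma> 2] root_system_uminus[OF rs assms] assms by simp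
qed

lemma uminus_positive_iff:
  assumes "\<gamma> \<in> R"
  shows "(\<lambda>i. - \<gamma> i) \<in> Rpos \<longleftrightarrow> \<gamma> \<notin> Rpos"
  using height_pos[of \<gamma>] height_neg[of \<gamma>] height_pos[of "\<lambda>i. - \<gamma> i"] height_neg[of "\<lambda>i. - \<gamma> i"]
    height_uminus[OF assms] root_system_uminus[OF rs assms] assms by linarith

text \<open>Writing \<open>s\<^sub>\<alpha> \<gamma> = \<gamma> - a\<^sub>\<gamma> \<alpha>\<close>, the heights over \<open>Rpos\<close> give
  \<open>(\<Sum>\<gamma>. a\<^sub>\<gamma>) ht \<alpha> = 2 \<Sum>\<gamma>\<in>A. ht \<gamma>\<close>, where \<open>A\<close> contains \<open>\<alpha>\<close>, because \<open>s\<^sub>\<alpha>\<close> permutes the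
  positive roots it keeps positive and \<open>-s\<^sub>\<alpha>\<close> permutes the others; and \<open>\<Sum>\<gamma>. a\<^sub>\<gamma> = 2\<langle>\<rho>, H\<^sub>\<alpha>\<rangle>\<close>.\<close>

lemma sum_height_reflection:
  assumes \<alpha>: "\<alpha> \<in> R"
  defines "A \<equiv> {\<gamma>\<in>Rpos. reflection cor \<alpha> \<gamma> \<notin> Rpos}"
  shows "(\<Sum>\<gamma>\<in>Rpos. ht (reflection cor \<alpha> \<gamma>)) = (\<Sum>\<gamma>\<in>Rpos. ht \<gamma>) - 2 * (\<Sum>\<gamma>\<in>A. ht \<gamma>)"
proof -
  let ?s = "reflection cor \<alpha>"
  have ss: "?s (?s \<gamma>) = \<gamma>" for \<gamma>
    using root_system_pair_coroot[OF rs \<alpha>] by (rule reflection_reflection)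
  have fin: "finite Rpos" "A \<subseteq> Rpos"
    using positive_subset root_system_finite[OF rs] finite_subset by (auto simp: A_def)
  have s_root: "?s \<gamma> \<in> R" if "\<gamma> \<in> Rpos" for \<gamma>
    using root_system_reflection[OF rs \<alpha>] positive_subset that by blast
  have "bij_betw ?s (Rpos - A) (Rpos - A)"
    by (rule bij_betw_byWitness[of _ ?s]) (auto simp: A_def ss)
  then have rest: "(\<Sum>\<gamma>\<in>Rpos - A. ht (?s \<gamma>)) = (\<Sum>\<gamma>\<in>Rpos - A. ht \<gamma>)"
    by (rule sum.reindex_bij_betw)
  have "bij_betw (\<lambda>\<gamma> i. - ?s \<gamma> i) A A"
    using s_root uminus_positive_iff positive_subset
    by (intro bij_betw_byWitness[of _ "\<lambda>\<gamma> i. - ?s \<gamma> i"])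
      (auto simp: A_def ss reflection_uminus subset_iff)
  then have "(\<Sum>\<gamma>\<in>A. ht (\<lambda>i. - ?s \<gamma> i)) = (\<Sum>\<gamma>\<in>A. ht \<gamma>)"
    by (rule sum.reindex_bij_betw)
  then have flipped: "(\<Sum>\<gamma>\<in>A. ht (?s \<gamma>)) = - (\<Sum>\<gamma>\<in>A. ht \<gamma>)"
    using height_uminus s_root fin(2) by (simp add: sum_negf subset_iff)
  show ?thesis
    using sum.subset_diff[OF fin(2,1), of ht] sum.subset_diff[OF fin(2,1), of "\<lambda>\<gamma>. ht (?s \<gamma>)"]
      rest flipped by linarith
qed

lemma rho_pair_coroot:
  assumes \<alpha>: "\<alpha> \<in> Rpos"
  shows "\<exists>N::nat. N > 0 \<and> 2 * pair (rho Rpos) (cor \<alpha>) = of_nat N"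
proof -
  have \<alpha>R: "\<alpha> \<in> R"
    using \<alpha> positive_subset by blast
  obtain a where a: "\<And>\<gamma>. \<gamma> \<in> R \<Longrightarrow> pair \<gamma> (cor \<alpha>) = of_int (a \<gamma>)"
    using bchoice[of R "\<lambda>\<gamma> z. pair \<gamma> (cor \<alpha>) = of_int z"] root_system_pair_Ints[OF rs \<alpha>R]
    by (metis Ints_cases)
  define A where "A = {\<gamma>\<in>Rpos. reflection cor \<alpha> \<gamma> \<notin> Rpos}"
  have "reflection cor \<alpha> \<gamma> = (\<lambda>i. \<gamma> i - of_int (a \<gamma>) * \<alpha> i)" if "\<gamma> \<in> R" for \<gamma>
    by (rule ext) (simp add: reflection_apply a[OF that])
  then have "ht (reflection cor \<alpha> \<gamma>) = ht \<gamma> - a \<gamma> * ht \<alpha>" if "\<gamma> \<in> Rpos" for \<gamma>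
    using height_diff root_system_reflection[OF rs \<alpha>R] \<alpha>R that positive_subset by (metis subsetD)
  then have "(\<Sum>\<gamma>\<in>Rpos. a \<gamma>) * ht \<alpha> = 2 * (\<Sum>\<gamma>\<in>A. ht \<gamma>)"
    using sum_height_reflection[OF \<alpha>R] by (simp add: A_def sum_subtractf sum_distrib_right)
  moreover have "ht \<alpha> \<le> (\<Sum>\<gamma>\<in>A. ht \<gamma>)"
  proof (rule member_le_sum)
    show "\<alpha> \<in> A"
      using \<alpha> \<alpha>R uminus_positive_iff[OF \<alpha>R] root_system_pair_coroot[OF rs \<alpha>R]
      by (simp add: A_def reflection_def)
    show "finite A"
      using positive_subset root_system_finite[OF rs] by (auto simp: A_def intro: finite_subset)
  qed (use height_pos in \<open>auto simp: A_def less_imp_le\<close>)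
  ultimately have "(\<Sum>\<gamma>\<in>Rpos. a \<gamma>) * ht \<alpha> > 0"
    using height_pos[OF \<alpha>] by linarith
  then have sum_pos: "(\<Sum>\<gamma>\<in>Rpos. a \<gamma>) > 0"
    using height_pos[OF \<alpha>] by (simp add: zero_less_mult_iff)
  have "rho Rpos = (\<lambda>i. \<Sum>\<gamma>\<in>Rpos. (1 / 2) * \<gamma> i)"
    by (simp add: rho_def sum_divide_distrib)
  then have "pair (rho Rpos) (cor \<alpha>) = (\<Sum>\<gamma>\<in>Rpos. (1 / 2) * pair \<gamma> (cor \<alpha>))"
    by (simp only: pair_sum_left)
  also have "\<dots> = (\<Sum>\<gamma>\<in>Rpos. (1 / 2) * of_int (a \<gamma>))"
    using a positive_subset by (intro sum.cong) auto
  finally have "2 * pair (rho Rpos) (cor \<alpha>) = of_int (\<Sum>\<gamma>\<in>Rpos. a \<gamma>)"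
    by (simp add: sum_divide_distrib[symmetric] mult.commute)
  with sum_pos show ?thesis
    by (intro exI[of _ "nat (\<Sum>\<gamma>\<in>Rpos. a \<gamma>)"]) simp
qed

end

text \<open>The height of a root is the sum of its integer coordinates with respect to the base.\<close>

lemma positive_system_obtain_height:
  fixes R Rpos :: "('n::finite \<Rightarrow> 'a::field_char_0) set"
  assumes rs: "root_system R cor" and ps: "positive_system R Rpos"
  obtains ht where "root_height R Rpos cor ht"
proof -
  obtain \<Delta> k where fin: "finite \<Delta>"
    and k: "\<And>\<beta>. \<beta> \<in> R \<Longrightarrow> \<beta> = (\<lambda>i. \<Sum>\<delta>\<in>\<Delta>. of_int (k \<beta> \<delta>) * \<delta> i)"
    and pos: "\<And>\<beta> \<delta>. \<beta> \<in> Rpos \<Longrightarrow> \<delta> \<in> \<Delta> \<Longrightarrow> k \<beta> \<delta> \<ge> 0"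
    and neg: "\<And>\<beta> \<delta>. \<beta> \<in> R \<Longrightarrow> \<beta> \<notin> Rpos \<Longrightarrow> \<delta> \<in> \<Delta> \<Longrightarrow> k \<beta> \<delta> \<le> 0"
    and diff: "\<And>\<gamma> \<alpha> a \<delta>. \<gamma> \<in> R \<Longrightarrow> \<alpha> \<in> R \<Longrightarrow> (\<lambda>i. \<gamma> i - of_int a * \<alpha> i) \<in> R \<Longrightarrow> \<delta> \<in> \<Delta> \<Longrightarrow>
      k (\<lambda>i. \<gamma> i - of_int a * \<alpha> i) \<delta> = k \<gamma> \<delta> - a * k \<alpha> \<delta>"
    by (rule positive_system_obtain_coords[OF rs ps]) (rule that)
  have nonzero: "\<exists>\<delta>\<in>\<Delta>. k \<gamma> \<delta> \<noteq> 0" if "\<gamma> \<in> R" for \<gamma>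
    using k[OF that] root_system_nonzero[OF rs that] by auto
  define ht where "ht \<gamma> = (\<Sum>\<delta>\<in>\<Delta>. k \<gamma> \<delta>)" for \<gamma>
  have "root_height R Rpos cor ht"
  proof
    show "root_system R cor"
      by (fact rs)
    show "Rpos \<subseteq> R"
      using ps by (rule positive_system_subset)
    show "ht \<gamma> > 0" if \<gamma>: "\<gamma> \<in> Rpos" for \<gamma>
    proof -
      obtain \<delta> where "\<delta> \<in> \<Delta>" "k \<gamma> \<delta> \<noteq> 0"
        using nonzero[of \<gamma>] \<gamma> positive_system_subset[OF ps] by blast
      then show ?thesis
        unfolding ht_def using pos[OF \<gamma>] by (intro sum_pos2[OF fin]) (auto simp: order_less_le)
    qed
    show "ht \<gamma> < 0" if \<gamma>: "\<gamma> \<in> R" "\<gamma> \<notin> Rpos" for \<gamma>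
    proof -
      obtain \<delta> where "\<delta> \<in> \<Delta>" "k \<gamma> \<delta> \<noteq> 0"
        using nonzero[OF \<gamma>(1)] by blast
      then have "(\<Sum>\<delta>\<in>\<Delta>. - k \<gamma> \<delta>) > 0"
        using neg[OF \<gamma>] by (intro sum_pos2[OF fin]) (auto simp: order_less_le)
      then show ?thesis
        by (simp add: ht_def sum_negf)
    qed
    show "ht (\<lambda>i. \<gamma> i - of_int a * \<alpha> i) = ht \<gamma> - a * ht \<alpha>"
      if "\<gamma> \<in> R" "\<alpha> \<in> R" "(\<lambda>i. \<gamma> i - of_int a * \<alpha> i) \<in> R" for \<gamma> \<alpha> a
      using diff[OF that] by (simp add: ht_def sum_subtractf sum_distrib_left)
  qed
  then show thesis
    by (rule that)
qed

lemma positive_system_uminus: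
  assumes "root_system R cor" "positive_system R Rpos" "\<gamma> \<in> R" "\<gamma> \<notin> Rpos"
  shows "(\<lambda>i. - \<gamma> i) \<in> Rpos"
proof -
  obtain ht where "root_height R Rpos cor ht"
    by (rule positive_system_obtain_height[OF assms(1,2)]) (rule that)
  then show ?thesis
    using root_height.uminus_positive_iff assms(3,4) by blast
qed

lemma positive_system_rho_pair_coroot:
  assumes "root_system R cor" "positive_system R Rpos" "\<alpha> \<in> Rpos"
  shows "\<exists>N::nat. N > 0 \<and> 2 * pair (rho Rpos) (cor \<alpha>) = of_nat N"
proof -
  obtain ht where "root_height R Rpos cor ht"
    by (rule positive_system_obtain_height[OF assms(1,2)]) (rule that)
  then show ?thesis
    using root_height.rho_pair_coroot assms(3) by blast
qed

section \<open>The dot action on integral roots\<close>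

lemma simple_roots_image:
  assumes inj: "inj w" and wP: "w ` P = P" and add: "\<And>x y. w (\<lambda>i. x i + y i) = (\<lambda>i. w x i + w y i)"
  shows "w ` simple_roots P = simple_roots P"
proof -
  have decomposable_iff: "(\<exists>\<beta>\<in>P. \<exists>\<gamma>\<in>P. w \<alpha> = (\<lambda>i. \<beta> i + \<gamma> i)) \<longleftrightarrow>
      (\<exists>\<beta>\<in>P. \<exists>\<gamma>\<in>P. \<alpha> = (\<lambda>i. \<beta> i + \<gamma> i))" for \<alpha>
  proof
    assume "\<exists>\<beta>\<in>P. \<exists>\<gamma>\<in>P. w \<alpha> = (\<lambda>i. \<beta> i + \<gamma> i)"
    then obtain \<beta>' \<gamma>' where "\<beta>' \<in> w ` P" "\<gamma>' \<in> w ` P" and sum: "w \<alpha> = (\<lambda>i. \<beta>' i + \<gamma>' i)"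
      unfolding wP by blast
    then obtain \<beta> \<gamma> where "\<beta> \<in> P" "\<gamma> \<in> P" "\<beta>' = w \<beta>" "\<gamma>' = w \<gamma>"
      by (auto elim!: imageE)
    moreover from this have "w \<alpha> = w (\<lambda>i. \<beta> i + \<gamma> i)"
      using sum by (simp add: add)
    then have "\<alpha> = (\<lambda>i. \<beta> i + \<gamma> i)"
      by (rule injD[OF inj])
    ultimately show "\<exists>\<beta>\<in>P. \<exists>\<gamma>\<in>P. \<alpha> = (\<lambda>i. \<beta> i + \<gamma> i)"
      by blast
  next
    assume "\<exists>\<beta>\<in>P. \<exists>\<gamma>\<in>P. \<alpha> = (\<lambda>i. \<beta> i + \<gamma> i)"
    then obtain \<beta> \<gamma> where "\<beta> \<in> P" "\<gamma> \<in> P" "\<alpha> = (\<lambda>i. \<beta> i + \<gamma> i)"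
      by blast
    moreover have "w \<beta> \<in> P" "w \<gamma> \<in> P"
      using calculation(1,2) wP by blast+
    ultimately show "\<exists>\<beta>\<in>P. \<exists>\<gamma>\<in>P. w \<alpha> = (\<lambda>i. \<beta> i + \<gamma> i)"
      using add by blast
  qed
  have "w \<alpha> \<in> P \<longleftrightarrow> \<alpha> \<in> P" for \<alpha>
    using inj_image_mem_iff[OF inj] wP by metis
  then have simple_iff: "w \<alpha> \<in> simple_roots P \<longleftrightarrow> \<alpha> \<in> simple_roots P" for \<alpha>
    using decomposable_iff[of \<alpha>] by (auto simp: simple_roots_def)
  show ?thesis
  proof (intro Set.set_eqI iffI)
    fix y
    assume y: "y \<in> simple_roots P"
    then have "y \<in> w ` P"
      using wP by (simp add: simple_roots_def)
    then show "y \<in> w ` simple_roots P"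
      using simple_iff y by blast
  qed (use simple_iff in blast)
qed

lemma dominant_rho_pair_coroot:
  fixes R Rpos :: "('n::finite \<Rightarrow> 'a::field_char_0) set"
  assumes rs: "root_system R cor" and ps: "positive_system R Rpos"
    and \<xi>: "\<xi> \<in> dominant_integral Rpos cor" and \<alpha>: "\<alpha> \<in> Rpos"
  shows "\<exists>N::nat. N > 0 \<and> 2 * (pair \<xi> (cor \<alpha>) + pair (rho Rpos) (cor \<alpha>)) = of_nat N"
proof -
  obtain n :: nat where "pair \<xi> (cor \<alpha>) = of_nat n"
    using \<xi> \<alpha> by (auto simp: dominant_integral_def elim: Nats_cases)
  moreover obtain N :: nat where "N > 0" "2 * pair (rho Rpos) (cor \<alpha>) = of_nat N"
    using positive_system_rho_pair_coroot[OF rs ps \<alpha>] by blast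
  ultimately show ?thesis
    by (intro exI[of _ "2 * n + N"]) (simp add: algebra_simps)
qed

text \<open>A dominant integral weight shifted by \<open>\<rho>\<close> pairs positively with the coroots of positive
  roots and negatively with those of negative roots, so such pairings determine positivity.\<close>

lemma dominant_rho_pair_coroot_eq_imp_positive:
  fixes R Rpos :: "('n::finite \<Rightarrow> 'a::field_char_0) set"
  assumes rs: "root_system R cor" and ps: "positive_system R Rpos"
    and \<xi>: "\<xi> \<in> dominant_integral Rpos cor" and \<alpha>: "\<alpha> \<in> Rpos" and \<beta>: "\<beta> \<in> R"
    and eq: "pair \<xi> (cor \<beta>) + pair (rho Rpos) (cor \<beta>) = pair \<xi> (cor \<alpha>) + pair (rho Rpos) (cor \<alpha>)"
  shows "\<beta> \<in> Rpos"
proof (rule ccontr)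
  assume "\<beta> \<notin> Rpos"
  then have "(\<lambda>i. - \<beta> i) \<in> Rpos"
    by (rule positive_system_uminus[OF rs ps \<beta>])
  then obtain M :: nat
    where "2 * (pair \<xi> (cor (\<lambda>i. - \<beta> i)) + pair (rho Rpos) (cor (\<lambda>i. - \<beta> i))) = of_nat M"
    using dominant_rho_pair_coroot[OF rs ps \<xi>] by blast
  then have "- (2 * (pair \<xi> (cor \<beta>) + pair (rho Rpos) (cor \<beta>))) = of_nat M"
    by (simp add: pair_coroot_uminus[OF rs \<beta>] algebra_simps)
  then have "2 * (pair \<xi> (cor \<beta>) + pair (rho Rpos) (cor \<beta>)) = - of_nat M"
    by (metis minus_minus)
  moreover obtain N :: nat where "N > 0" "2 * (pair \<xi> (cor \<alpha>) + pair (rho Rpos) (cor \<alpha>)) = of_nat N"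
    using dominant_rho_pair_coroot[OF rs ps \<xi> \<alpha>] by blast
  ultimately have "- of_nat M = (of_nat N :: 'a)"
    using eq by (simp add: algebra_simps)
  then have "of_nat (M + N) = (0::'a)"
    by (simp add: neg_eq_iff_add_eq_0)
  then show False
    using \<open>N > 0\<close> by (simp only: of_nat_eq_0_iff)
qed

lemma act_ideal_coroot_shift:
  assumes rs: "root_system R cor" and w: "w \<in> weyl_group R cor" and act: "act_ideal Rpos w \<Omega> = \<Omega>"
    and \<alpha>: "\<alpha> \<in> R" and f: "(\<lambda>\<xi>. pair \<xi> (cor \<alpha>) - c) \<in> \<Omega>"
  shows "(\<lambda>\<xi>. pair \<xi> (cor (w \<alpha>)) + pair (rho Rpos) (cor (w \<alpha>)) - pair (rho Rpos) (cor \<alpha>) - c) \<in> \<Omega>"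
proof -
  have "(\<lambda>\<xi>. pair (dot Rpos (inv_into UNIV w) \<xi>) (cor \<alpha>) - c) \<in> act_ideal Rpos w \<Omega>"
    unfolding act_ideal_def using f by (rule rev_image_eqI) simp
  then show ?thesis
    using act by (simp add: pair_dot_inv_coroot[OF rs w \<alpha>])
qed

lemma weyl_group_integral_positive_root:
  fixes R Rpos :: "('n::finite \<Rightarrow> 'a::field_char_0) set"
  assumes rs: "root_system R cor" and ps: "positive_system R Rpos"
    and w: "w \<in> weyl_group R cor" and act: "act_ideal Rpos w \<Omega> = \<Omega>"
    and \<xi>: "\<xi> \<in> zero_set \<Omega>" "\<xi> \<in> dominant_integral Rpos cor"
    and \<alpha>: "\<alpha> \<in> integral_roots R cor \<Omega> \<inter> Rpos"
  shows "w \<alpha> \<in> integral_roots R cor \<Omega> \<inter> Rpos"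
proof -
  obtain n :: int where \<alpha>R: "\<alpha> \<in> R" and \<alpha>P: "\<alpha> \<in> Rpos"
    and n: "(\<lambda>\<xi>. pair \<xi> (cor \<alpha>) - of_int n) \<in> \<Omega>"
    using \<alpha> by (auto simp: integral_roots_def)
  let ?g = "\<lambda>\<xi>. pair \<xi> (cor (w \<alpha>)) + pair (rho Rpos) (cor (w \<alpha>)) - pair (rho Rpos) (cor \<alpha>) - of_int n"
  have "?g \<in> \<Omega>"
    using act_ideal_coroot_shift[OF rs w act \<alpha>R n] .
  then have "?g \<xi> = 0" "pair \<xi> (cor \<alpha>) - of_int n = 0"
    using \<xi>(1) n by (auto simp: zero_set_def)
  then have eq: "pair \<xi> (cor (w \<alpha>)) + pair (rho Rpos) (cor (w \<alpha>)) =
      pair \<xi> (cor \<alpha>) + pair (rho Rpos) (cor \<alpha>)"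
    by (simp add: algebra_simps)
  have w\<alpha>: "w \<alpha> \<in> R" "w \<alpha> \<in> Rpos"
    using weyl_group_root[OF rs w \<alpha>R]
      dominant_rho_pair_coroot_eq_imp_positive[OF rs ps \<xi>(2) \<alpha>P _ eq] by auto
  then obtain m :: nat where "pair \<xi> (cor (w \<alpha>)) = of_nat m"
    using \<xi>(2) by (auto simp: dominant_integral_def elim: Nats_cases)
  then have "?g = (\<lambda>\<xi>'. pair \<xi>' (cor (w \<alpha>)) - of_int (int m))"
    using eq \<open>?g \<xi> = 0\<close> by (auto simp: fun_eq_iff algebra_simps)
  with \<open>?g \<in> \<Omega>\<close> have "(\<lambda>\<xi>'. pair \<xi>' (cor (w \<alpha>)) - of_int (int m)) \<in> \<Omega>"
    by simp
  with w\<alpha> show ?thesis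
    unfolding integral_roots_def by blast
qed

theorem mainTheorem16:
  fixes R Rpos :: "('n::finite \<Rightarrow> 'a::field_char_0) set"
    and cor :: "('n \<Rightarrow> 'a) \<Rightarrow> ('n \<Rightarrow> 'a)"
    and \<Omega> :: "(('n \<Rightarrow> 'a) \<Rightarrow> 'a) set"
    and w :: "('n \<Rightarrow> 'a) \<Rightarrow> ('n \<Rightarrow> 'a)"
  assumes "alg_closed TYPE('a)"
    and "root_system R cor"
    and "positive_system R Rpos"
    and "primeideal \<Omega> S_ring"
    and "strongly_dominant Rpos cor \<Omega>"
    and "w \<in> weyl_group R cor"
    and "act_ideal Rpos w \<Omega> = \<Omega>"
  shows "w ` B_lambda R Rpos cor \<Omega> = B_lambda R Rpos cor \<Omega>"
proof -
  obtain \<xi> where \<xi>: "\<xi> \<in> zero_set \<Omega>" "\<xi> \<in> dominant_integral Rpos cor"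
    using strongly_dominant_obtain_zero[OF assms(1,4,5)] by blast
  define L where "L = integral_roots R cor \<Omega> \<inter> Rpos"
  have "w ` L \<subseteq> L"
    using weyl_group_integral_positive_root[OF assms(2,3,6,7) \<xi>] by (auto simp: L_def)
  moreover have "finite L"
    using root_system_finite[OF assms(2)] by (auto simp: L_def integral_roots_def)
  moreover have inj: "inj w"
    using weyl_group_bij[OF assms(2,6)] by (rule bij_is_inj)
  ultimately have "w ` L = L"
    by (simp add: endo_inj_surj inj_on_subset)
  then show ?thesis
    unfolding B_lambda_def L_def[symmetric]
    using simple_roots_image[OF inj] weyl_group_add[OF assms(2,6)] by blast
qed

end
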